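(* Let $P:\mathcal C^{op}\to\mathbf{Heyt}$ be a weak hyperdoctrine with comprehensive diagonals and let $A$ be an object of $\mathcal C$. Then $P$ satisfies the Axiom of Choice on $A$ if and only if its elementary quotient completion $\overline P$ satisfies the Axiom of Choice on $(A,\delta_A)$.
   Context: An elementary doctrine on $\mathcal C$ with finite products is $P:\mathcal C^{op}\to\mathbf{InfSL}$ with equality predicates $\delta_A\in P(A\times A)$ (written $a=_Aa'$) such that $\alpha\mapsto P_{\langle pr_1,pr_2\rangle}(\alpha)\wedge P_{\langle pr_2,pr_3\rangle}(\delta_A)$ is left adjoint to $P_{\langle pr_1,pr_2,pr_2\rangle}$. A weak hyperdoctrine is an elementary doctrine such that $\mathcal C$ is weakly cartesian closed (for all $A,B$ there is $W$ and $ev:W\times A\to B$ such that every $C\times A\to B$ is $ev\circ(g\times\mathrm{id}_A)$ for some, not necessarily unique, $g$), the fibres are Heyting algebras with Heyting reindexing, and reindexing along projections has left and right adjoints $\exists,\forall$ satisfying Beck–Chevalley. Comprehensive diagonals: $f,g:X\to Y$ are equal whenever $x:X\mid\top\vdash f(x)=_Yg(x)$. The Axiom of Choice holds on $A$ if for every object $B$ and $R\in P(A\times B)$: $\forall a:A.\exists b:B.R(a,b)\vdash\exists f:W.\forall a:A.R(a,ev(f,a))$ with $ev:W\times A\to B$ a weak evaluation. The elementary quotient completion $\overline P:\mathcal Q_P^{op}\to\mathbf{InfSL}$ has objects $(A,\rho)$ with $\rho$ a $P$-equivalence relation, arrows equivalence classes of $\rho$-$\sigma$-preserving arrows (with $f\sim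 g$ iff $\rho(a,a')\vdash\sigma(f(a),g(a'))$), and $\overline P(A,\rho)=\{\alpha\in P(A)\mid\alpha(a)\wedge\rho(a,a')\vdash\alpha(a')\}$. *)

theory Defs
  imports Main
begin

section \<open>Categories with (chosen) finite products\<close>

record ('o,'a) cat =
  cObj  :: "'o set"
  cArr  :: "'a set"
  cdom  :: "'a \<Rightarrow> 'o"
  ccod  :: "'a \<Rightarrow> 'o"
  ccomp :: "'a \<Rightarrow> 'a \<Rightarrow> 'a"   (* ccomp g f = g o f *)
  cid   :: "'o \<Rightarrow> 'a"
  cprod :: "'o \<Rightarrow> 'o \<Rightarrow> 'o"
  cpr1  :: "'o \<Rightarrow> 'o \<Rightarrow> 'a"
  cpr2  :: "'o \<Rightarrow> 'o \<Rightarrow> 'a"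
  cpair :: "'a \<Rightarrow> 'a \<Rightarrow> 'a"
  cterm :: "'o"
  cbang :: "'o \<Rightarrow> 'a"

definition hom :: "('o,'a) cat \<Rightarrow> 'o \<Rightarrow> 'o \<Rightarrow> 'a set" where
  "hom C X Y = {f \<in> cArr C. cdom C f = X \<and> ccod C f = Y}"

definition cat_fp :: "('o,'a) cat \<Rightarrow> bool" where
  "cat_fp C \<longleftrightarrow>
    (\<forall>f\<in>cArr C. cdom C f \<in> cObj C \<and> ccod C f \<in> cObj C) \<and>
    (\<forall>X\<in>cObj C. cid C X \<in> hom C X X) \<and>
    (\<forall>X Y Z f g. f \<in> hom C X Y \<longrightarrow> g \<in> hom C Y Z \<longrightarrow> ccomp C g f \<in> hom C X Z) \<and>
    (\<forall>X Y f. f \<in> hom C X Y \<longrightarrow> ccomp C f (cid C X) = f \<and> ccomp C (cid C Y) f = f) \<and>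
    (\<forall>f g h. f \<in> cArr C \<longrightarrow> g \<in> cArr C \<longrightarrow> h \<in> cArr C \<longrightarrow>
        ccod C f = cdom C g \<longrightarrow> ccod C g = cdom C h \<longrightarrow>
        ccomp C h (ccomp C g f) = ccomp C (ccomp C h g) f) \<and>
    cterm C \<in> cObj C \<and>
    (\<forall>X\<in>cObj C. cbang C X \<in> hom C X (cterm C) \<and> (\<forall>f\<in>hom C X (cterm C). f = cbang C X)) \<and>
    (\<forall>X\<in>cObj C. \<forall>Y\<in>cObj C.
        cprod C X Y \<in> cObj C \<and>
        cpr1 C X Y \<in> hom C (cprod C X Y) X \<and> cpr2 C X Y \<in> hom C (cprod C X Y) Y \<and>
        (\<forall>Z f g. f \<in> hom C Z X \<longrightarrow> g \<in> hom C Z Y \<longrightarrow>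
            cpair C f g \<in> hom C Z (cprod C X Y) \<and>
            ccomp C (cpr1 C X Y) (cpair C f g) = f \<and> ccomp C (cpr2 C X Y) (cpair C f g) = g) \<and>
        (\<forall>Z h. h \<in> hom C Z (cprod C X Y) \<longrightarrow>
            h = cpair C (ccomp C (cpr1 C X Y) h) (ccomp C (cpr2 C X Y) h)))"

definition ptimes :: "('o,'a) cat \<Rightarrow> 'o \<Rightarrow> 'o \<Rightarrow> 'a \<Rightarrow> 'a \<Rightarrow> 'a" where
  "ptimes C A B f g = cpair C (ccomp C f (cpr1 C A B)) (ccomp C g (cpr2 C A B))"

definition weak_eval :: "('o,'a) cat \<Rightarrow> 'o \<Rightarrow> 'o \<Rightarrow> 'o \<Rightarrow> 'a \<Rightarrow> bool" where
  "weak_eval C A B W ev \<longleftrightarrow> W \<in> cObj C \<and> ev \<in> hom C (cprod C W A) B \<and>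
     (\<forall>Z\<in>cObj C. \<forall>h\<in>hom C (cprod C Z A) B. \<exists>g\<in>hom C Z W.
        h = ccomp C ev (ptimes C Z A g (cid C A)))"

definition weakly_cc :: "('o,'a) cat \<Rightarrow> bool" where
  "weakly_cc C \<longleftrightarrow> (\<forall>A\<in>cObj C. \<forall>B\<in>cObj C. \<exists>W ev. weak_eval C A B W ev)"

section \<open>Doctrines (fibres given as posets, reindexing contravariant)\<close>

record ('o,'a,'p) doctrine =
  dPr  :: "'o \<Rightarrow> 'p set"
  dle  :: "'o \<Rightarrow> 'p \<Rightarrow> 'p \<Rightarrow> bool"
  dre  :: "'a \<Rightarrow> 'p \<Rightarrow> 'p"
  deq  :: "'o \<Rightarrow> 'p"              (* equality predicate delta_A in P(A x A) *)

definition ptop :: "('o,'a,'p) doctrine \<Rightarrow> 'o \<Rightarrow> 'p" where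
  "ptop D X = (THE t. t \<in> dPr D X \<and> (\<forall>a\<in>dPr D X. dle D X a t))"
definition pbot :: "('o,'a,'p) doctrine \<Rightarrow> 'o \<Rightarrow> 'p" where
  "pbot D X = (THE t. t \<in> dPr D X \<and> (\<forall>a\<in>dPr D X. dle D X t a))"
definition pmeet :: "('o,'a,'p) doctrine \<Rightarrow> 'o \<Rightarrow> 'p \<Rightarrow> 'p \<Rightarrow> 'p" where
  "pmeet D X a b = (THE c. c \<in> dPr D X \<and>
     (\<forall>x\<in>dPr D X. dle D X x c \<longleftrightarrow> dle D X x a \<and> dle D X x b))"
definition pjoin :: "('o,'a,'p) doctrine \<Rightarrow> 'o \<Rightarrow> 'p \<Rightarrow> 'p \<Rightarrow> 'p" where
  "pjoin D X a b = (THE c. c \<in> dPr D X \<and>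
     (\<forall>x\<in>dPr D X. dle D X c x \<longleftrightarrow> dle D X a x \<and> dle D X b x))"
definition pimp :: "('o,'a,'p) doctrine \<Rightarrow> 'o \<Rightarrow> 'p \<Rightarrow> 'p \<Rightarrow> 'p" where
  "pimp D X a b = (THE c. c \<in> dPr D X \<and>
     (\<forall>x\<in>dPr D X. dle D X x c \<longleftrightarrow> dle D X (pmeet D X x a) b))"

definition infsl_fibre :: "('o,'a,'p) doctrine \<Rightarrow> 'o \<Rightarrow> bool" where
  "infsl_fibre D X \<longleftrightarrow>
    (\<forall>a\<in>dPr D X. dle D X a a) \<and>
    (\<forall>a\<in>dPr D X. \<forall>b\<in>dPr D X. \<forall>c\<in>dPr D X. dle D X a b \<longrightarrow> dle D X b c \<longrightarrow> dle D X a c) \<and>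
    (\<forall>a\<in>dPr D X. \<forall>b\<in>dPr D X. dle D X a b \<longrightarrow> dle D X b a \<longrightarrow> a = b) \<and>
    (\<exists>t\<in>dPr D X. \<forall>a\<in>dPr D X. dle D X a t) \<and>
    (\<forall>a\<in>dPr D X. \<forall>b\<in>dPr D X. \<exists>c\<in>dPr D X.
        \<forall>x\<in>dPr D X. dle D X x c \<longleftrightarrow> dle D X x a \<and> dle D X x b)"

definition heyting_fibre :: "('o,'a,'p) doctrine \<Rightarrow> 'o \<Rightarrow> bool" where
  "heyting_fibre D X \<longleftrightarrow> infsl_fibre D X \<and>
    (\<exists>t\<in>dPr D X. \<forall>a\<in>dPr D X. dle D X t a) \<and>
    (\<forall>a\<in>dPr D X. \<forall>b\<in>dPr D X. \<exists>c\<in>dPr D X.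
        \<forall>x\<in>dPr D X. dle D X c x \<longleftrightarrow> dle D X a x \<and> dle D X b x) \<and>
    (\<forall>a\<in>dPr D X. \<forall>b\<in>dPr D X. \<exists>c\<in>dPr D X.
        \<forall>x\<in>dPr D X. dle D X x c \<longleftrightarrow> dle D X (pmeet D X x a) b)"

definition doctrine :: "('o,'a) cat \<Rightarrow> ('o,'a,'p) doctrine \<Rightarrow> bool" where
  "doctrine C D \<longleftrightarrow> cat_fp C \<and>
    (\<forall>X\<in>cObj C. infsl_fibre D X) \<and>
    (\<forall>X Y f. f \<in> hom C X Y \<longrightarrow>
        (\<forall>a\<in>dPr D Y. dre D f a \<in> dPr D X) \<and>
        (\<forall>a\<in>dPr D Y. \<forall>b\<in>dPr D Y. dle D Y a b \<longrightarrow> dle D X (dre D f a) (dre D f b)) \<and>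
        dre D f (ptop D Y) = ptop D X \<and>
        (\<forall>a\<in>dPr D Y. \<forall>b\<in>dPr D Y. dre D f (pmeet D Y a b) = pmeet D X (dre D f a) (dre D f b))) \<and>
    (\<forall>X\<in>cObj C. \<forall>a\<in>dPr D X. dre D (cid C X) a = a) \<and>
    (\<forall>X Y Z f g. f \<in> hom C X Y \<longrightarrow> g \<in> hom C Y Z \<longrightarrow>
        (\<forall>a\<in>dPr D Z. dre D (ccomp C g f) a = dre D f (dre D g a)))"

text \<open>Elementary doctrine: for all X, A, the map
  alpha |-> P_<pr1,pr2>(alpha) /\ P_<pr2,pr3>(delta_A) : P(X x A) -> P((X x A) x A)
  is left adjoint to P_<pr1,pr2,pr2>.\<close>
definition elementary :: "('o,'a) cat \<Rightarrow> ('o,'a,'p) doctrine \<Rightarrow> bool" where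
  "elementary C D \<longleftrightarrow> doctrine C D \<and>
    (\<forall>A\<in>cObj C. deq D A \<in> dPr D (cprod C A A)) \<and>
    (\<forall>X\<in>cObj C. \<forall>A\<in>cObj C.
      (let XA = cprod C X A; XAA = cprod C XA A in
       \<forall>\<alpha>\<in>dPr D XA. \<forall>\<beta>\<in>dPr D XAA.
         dle D XAA (pmeet D XAA (dre D (cpr1 C XA A) \<alpha>)
                      (dre D (cpair C (ccomp C (cpr2 C X A) (cpr1 C XA A)) (cpr2 C XA A)) (deq D A))) \<beta>
         \<longleftrightarrow> dle D XA \<alpha> (dre D (cpair C (cid C XA) (cpr2 C X A)) \<beta>)))"

text \<open>Left and right adjoints to reindexing along f (unique when they exist, fibres being posets).\<close>
definition exL :: "('o,'a) cat \<Rightarrow> ('o,'a,'p) doctrine \<Rightarrow> 'a \<Rightarrow> 'p \<Rightarrow> 'p" where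
  "exL C D f \<alpha> = (THE \<beta>. \<beta> \<in> dPr D (ccod C f) \<and>
     (\<forall>\<gamma>\<in>dPr D (ccod C f). dle D (ccod C f) \<beta> \<gamma> \<longleftrightarrow> dle D (cdom C f) \<alpha> (dre D f \<gamma>)))"
definition allL :: "('o,'a) cat \<Rightarrow> ('o,'a,'p) doctrine \<Rightarrow> 'a \<Rightarrow> 'p \<Rightarrow> 'p" where
  "allL C D f \<alpha> = (THE \<beta>. \<beta> \<in> dPr D (ccod C f) \<and>
     (\<forall>\<gamma>\<in>dPr D (ccod C f). dle D (ccod C f) \<gamma> \<beta> \<longleftrightarrow> dle D (cdom C f) (dre D f \<gamma>) \<alpha>))"
definition has_exL :: "('o,'a) cat \<Rightarrow> ('o,'a,'p) doctrine \<Rightarrow> 'a \<Rightarrow> bool" where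
  "has_exL C D f \<longleftrightarrow> (\<forall>\<alpha>\<in>dPr D (cdom C f). \<exists>\<beta>\<in>dPr D (ccod C f).
     \<forall>\<gamma>\<in>dPr D (ccod C f). dle D (ccod C f) \<beta> \<gamma> \<longleftrightarrow> dle D (cdom C f) \<alpha> (dre D f \<gamma>))"
definition has_allL :: "('o,'a) cat \<Rightarrow> ('o,'a,'p) doctrine \<Rightarrow> 'a \<Rightarrow> bool" where
  "has_allL C D f \<longleftrightarrow> (\<forall>\<alpha>\<in>dPr D (cdom C f). \<exists>\<beta>\<in>dPr D (ccod C f).
     \<forall>\<gamma>\<in>dPr D (ccod C f). dle D (ccod C f) \<gamma> \<beta> \<longleftrightarrow> dle D (cdom C f) (dre D f \<gamma>) \<alpha>)"

definition weak_hyperdoctrine :: "('o,'a) cat \<Rightarrow> ('o,'a,'p) doctrine \<Rightarrow> bool" where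
  "weak_hyperdoctrine C D \<longleftrightarrow> elementary C D \<and> weakly_cc C \<and>
    (\<forall>X\<in>cObj C. heyting_fibre D X) \<and>
    (\<forall>X Y f. f \<in> hom C X Y \<longrightarrow>
        dre D f (pbot D Y) = pbot D X \<and>
        (\<forall>a\<in>dPr D Y. \<forall>b\<in>dPr D Y.
            dre D f (pjoin D Y a b) = pjoin D X (dre D f a) (dre D f b) \<and>
            dre D f (pimp D Y a b) = pimp D X (dre D f a) (dre D f b))) \<and>
    (\<forall>X\<in>cObj C. \<forall>Y\<in>cObj C.
        has_exL C D (cpr1 C X Y) \<and> has_allL C D (cpr1 C X Y) \<and>
        has_exL C D (cpr2 C X Y) \<and> has_allL C D (cpr2 C X Y)) \<and>
    (\<forall>X\<in>cObj C. \<forall>Y\<in>cObj C. \<forall>Z f. f \<in> hom C Z X \<longrightarrow>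
       (\<forall>\<alpha>\<in>dPr D (cprod C X Y).
          dre D f (exL C D (cpr1 C X Y) \<alpha>) = exL C D (cpr1 C Z Y) (dre D (ptimes C Z Y f (cid C Y)) \<alpha>) \<and>
          dre D f (allL C D (cpr1 C X Y) \<alpha>) = allL C D (cpr1 C Z Y) (dre D (ptimes C Z Y f (cid C Y)) \<alpha>))) \<and>
    (\<forall>X\<in>cObj C. \<forall>Y\<in>cObj C. \<forall>Z f. f \<in> hom C Z Y \<longrightarrow>
       (\<forall>\<alpha>\<in>dPr D (cprod C X Y).
          dre D f (exL C D (cpr2 C X Y) \<alpha>) = exL C D (cpr2 C X Z) (dre D (ptimes C X Z (cid C X) f) \<alpha>) \<and>
          dre D f (allL C D (cpr2 C X Y) \<alpha>) = allL C D (cpr2 C X Z) (dre D (ptimes C X Z (cid C X) f) \<alpha>)))"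

definition comprehensive_diagonals :: "('o,'a) cat \<Rightarrow> ('o,'a,'p) doctrine \<Rightarrow> bool" where
  "comprehensive_diagonals C D \<longleftrightarrow>
    (\<forall>X Y f g. f \<in> hom C X Y \<longrightarrow> g \<in> hom C X Y \<longrightarrow>
       dle D X (ptop D X) (dre D (cpair C f g) (deq D Y)) \<longrightarrow> f = g)"

text \<open>Axiom of Choice on A, as a sequent in the fibre over the terminal object:
  forall a:A. exists b:B. R(a,b) |- exists f:W. forall a:A. R(a, ev(f,a)),
  for every B, R in P(A x B) and every weak evaluation ev : W x A -> B.\<close>
definition AC :: "('o,'a) cat \<Rightarrow> ('o,'a,'p) doctrine \<Rightarrow> 'o \<Rightarrow> bool" where
  "AC C D A \<longleftrightarrow> (\<forall>B\<in>cObj C. \<forall>R\<in>dPr D (cprod C A B). \<forall>W ev. weak_eval C A B W ev \<longrightarrow>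
     dle D (cterm C)
       (allL C D (cbang C A) (exL C D (cpr1 C A B) R))
       (exL C D (cbang C W) (allL C D (cpr1 C W A) (dre D (cpair C (cpr2 C W A) ev) R))))"

section \<open>Elementary quotient completion\<close>

definition per_equiv :: "('o,'a) cat \<Rightarrow> ('o,'a,'p) doctrine \<Rightarrow> 'o \<Rightarrow> 'p \<Rightarrow> bool" where
  "per_equiv C D A \<rho> \<longleftrightarrow> \<rho> \<in> dPr D (cprod C A A) \<and>
    dle D A (ptop D A) (dre D (cpair C (cid C A) (cid C A)) \<rho>) \<and>
    dle D (cprod C A A) \<rho> (dre D (cpair C (cpr2 C A A) (cpr1 C A A)) \<rho>) \<and>
    (let AA = cprod C A A; AAA = cprod C AA A;
         p1 = ccomp C (cpr1 C A A) (cpr1 C AA A);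
         p2 = ccomp C (cpr2 C A A) (cpr1 C AA A);
         p3 = cpr2 C AA A in
     dle D AAA (pmeet D AAA (dre D (cpair C p1 p2) \<rho>) (dre D (cpair C p2 p3) \<rho>))
               (dre D (cpair C p1 p3) \<rho>))"

definition qobjs :: "('o,'a) cat \<Rightarrow> ('o,'a,'p) doctrine \<Rightarrow> ('o \<times> 'p) set" where
  "qobjs C D = {(A, \<rho>). A \<in> cObj C \<and> per_equiv C D A \<rho>}"

definition qrel :: "('o,'a) cat \<Rightarrow> ('o,'a,'p) doctrine \<Rightarrow> 'o \<times> 'p \<Rightarrow> 'o \<times> 'p \<Rightarrow> 'a \<Rightarrow> 'a \<Rightarrow> bool" where
  "qrel C D X Y f g \<longleftrightarrow> dle D (cprod C (fst X) (fst X)) (snd X)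
      (dre D (ptimes C (fst X) (fst X) f g) (snd Y))"

definition qpres :: "('o,'a) cat \<Rightarrow> ('o,'a,'p) doctrine \<Rightarrow> 'o \<times> 'p \<Rightarrow> 'o \<times> 'p \<Rightarrow> 'a \<Rightarrow> bool" where
  "qpres C D X Y f \<longleftrightarrow> f \<in> hom C (fst X) (fst Y) \<and> qrel C D X Y f f"

definition qclass :: "('o,'a) cat \<Rightarrow> ('o,'a,'p) doctrine \<Rightarrow> 'o \<times> 'p \<Rightarrow> 'o \<times> 'p \<Rightarrow> 'a \<Rightarrow> 'a set" where
  "qclass C D X Y f = {g. qpres C D X Y g \<and> qrel C D X Y g f}"

definition qarrs :: "('o,'a) cat \<Rightarrow> ('o,'a,'p) doctrine \<Rightarrow> (('o \<times> 'p) \<times> ('o \<times> 'p) \<times> 'a set) set" where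
  "qarrs C D = {(X, Y, S). X \<in> qobjs C D \<and> Y \<in> qobjs C D \<and>
                 (\<exists>f. qpres C D X Y f \<and> S = qclass C D X Y f)}"

definition qrep :: "('o \<times> 'p) \<times> ('o \<times> 'p) \<times> 'a set \<Rightarrow> 'a" where
  "qrep F = (SOME f. f \<in> snd (snd F))"

definition qcomp :: "('o,'a) cat \<Rightarrow> ('o,'a,'p) doctrine \<Rightarrow>
    ('o \<times> 'p) \<times> ('o \<times> 'p) \<times> 'a set \<Rightarrow> ('o \<times> 'p) \<times> ('o \<times> 'p) \<times> 'a set \<Rightarrow> ('o \<times> 'p) \<times> ('o \<times> 'p) \<times> 'a set" where
  "qcomp C D G F = (fst F, fst (snd G), qclass C D (fst F) (fst (snd G)) (ccomp C (qrep G) (qrep F)))"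

definition qid :: "('o,'a) cat \<Rightarrow> ('o,'a,'p) doctrine \<Rightarrow> 'o \<times> 'p \<Rightarrow> ('o \<times> 'p) \<times> ('o \<times> 'p) \<times> 'a set" where
  "qid C D X = (X, X, qclass C D X X (cid C (fst X)))"

definition qprodrel :: "('o,'a) cat \<Rightarrow> ('o,'a,'p) doctrine \<Rightarrow> 'o \<Rightarrow> 'o \<Rightarrow> 'p \<Rightarrow> 'p \<Rightarrow> 'p" where
  "qprodrel C D A B \<rho> \<sigma> = (let P = cprod C A B; PP = cprod C P P in
     pmeet D PP (dre D (ptimes C P P (cpr1 C A B) (cpr1 C A B)) \<rho>)
                (dre D (ptimes C P P (cpr2 C A B) (cpr2 C A B)) \<sigma>))"

definition qprod :: "('o,'a) cat \<Rightarrow> ('o,'a,'p) doctrine \<Rightarrow> 'o \<times> 'p \<Rightarrow> 'o \<times> 'p \<Rightarrow> 'o \<times> 'p" where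
  "qprod C D X Y = (cprod C (fst X) (fst Y), qprodrel C D (fst X) (fst Y) (snd X) (snd Y))"

definition qpr1 :: "('o,'a) cat \<Rightarrow> ('o,'a,'p) doctrine \<Rightarrow> 'o \<times> 'p \<Rightarrow> 'o \<times> 'p \<Rightarrow> ('o \<times> 'p) \<times> ('o \<times> 'p) \<times> 'a set" where
  "qpr1 C D X Y = (qprod C D X Y, X, qclass C D (qprod C D X Y) X (cpr1 C (fst X) (fst Y)))"

definition qpr2 :: "('o,'a) cat \<Rightarrow> ('o,'a,'p) doctrine \<Rightarrow> 'o \<times> 'p \<Rightarrow> 'o \<times> 'p \<Rightarrow> ('o \<times> 'p) \<times> ('o \<times> 'p) \<times> 'a set" where
  "qpr2 C D X Y = (qprod C D X Y, Y, qclass C D (qprod C D X Y) Y (cpr2 C (fst X) (fst Y)))"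

definition qpair :: "('o,'a) cat \<Rightarrow> ('o,'a,'p) doctrine \<Rightarrow>
    ('o \<times> 'p) \<times> ('o \<times> 'p) \<times> 'a set \<Rightarrow> ('o \<times> 'p) \<times> ('o \<times> 'p) \<times> 'a set \<Rightarrow> ('o \<times> 'p) \<times> ('o \<times> 'p) \<times> 'a set" where
  "qpair C D F G = (let Z = fst F; P = qprod C D (fst (snd F)) (fst (snd G)) in
     (Z, P, qclass C D Z P (cpair C (qrep F) (qrep G))))"

definition qterm :: "('o,'a) cat \<Rightarrow> ('o,'a,'p) doctrine \<Rightarrow> 'o \<times> 'p" where
  "qterm C D = (cterm C, deq D (cterm C))"

definition qbang :: "('o,'a) cat \<Rightarrow> ('o,'a,'p) doctrine \<Rightarrow> 'o \<times> 'p \<Rightarrow> ('o \<times> 'p) \<times> ('o \<times> 'p) \<times> 'a set" where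
  "qbang C D X = (X, qterm C D, qclass C D X (qterm C D) (cbang C (fst X)))"

definition qcat :: "('o,'a) cat \<Rightarrow> ('o,'a,'p) doctrine \<Rightarrow> ('o \<times> 'p, ('o \<times> 'p) \<times> ('o \<times> 'p) \<times> 'a set) cat" where
  "qcat C D = \<lparr> cObj = qobjs C D, cArr = qarrs C D, cdom = fst, ccod = (\<lambda>F. fst (snd F)),
     ccomp = qcomp C D, cid = qid C D, cprod = qprod C D, cpr1 = qpr1 C D, cpr2 = qpr2 C D,
     cpair = qpair C D, cterm = qterm C D, cbang = qbang C D \<rparr>"

text \<open>The doctrine overline P on Q_P: descent predicates, order and reindexing from P,
  equality on (A,rho) given by rho.\<close>
definition qdoc :: "('o,'a) cat \<Rightarrow> ('o,'a,'p) doctrine \<Rightarrow> ('o \<times> 'p, ('o \<times> 'p) \<times> ('o \<times> 'p) \<times> 'a set, 'p) doctrine" where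
  "qdoc C D = \<lparr> dPr = (\<lambda>X. {\<alpha> \<in> dPr D (fst X).
        dle D (cprod C (fst X) (fst X))
          (pmeet D (cprod C (fst X) (fst X)) (dre D (cpr1 C (fst X) (fst X)) \<alpha>) (snd X))
          (dre D (cpr2 C (fst X) (fst X)) \<alpha>)}),
     dle = (\<lambda>X. dle D (fst X)),
     dre = (\<lambda>F. dre D (qrep F)),
     deq = snd \<rparr>"

end

theory Submission
  imports Defs
begin

text \<open>
  On an object of the form \<open>(A, \<delta>\<^sub>A)\<close> every predicate of \<open>P(A)\<close> descends, and the quantifiers of
  \<open>\<overline>P\<close> along projections and along \<open>X \<rightarrow> 1\<close> are those of \<open>P\<close>. Hence, for a weak evaluation of
  \<open>\<Q>\<^sub>P\<close> with representative \<open>e : W \<times> A \<rightarrow> B\<close>, the choice sequent of \<open>\<overline>P\<close> is literally the one of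
  \<open>P\<close> for \<open>e\<close>.

  If \<open>P\<close> has choice on \<open>A\<close>, take a weak evaluation \<open>ev\<^sub>0 : W\<^sub>0 \<times> A \<rightarrow> B\<close> of \<open>\<C>\<close>. Read as an arrow
  \<open>(W\<^sub>0, \<delta>) \<times> (A, \<delta>) \<rightarrow> (B, \<sigma>)\<close> it factors through the weak evaluation of \<open>\<Q>\<^sub>P\<close>, so
  \<open>ev\<^sub>0\<close> is related to \<open>e \<circ> (g \<times> id)\<close> for some \<open>g : W\<^sub>0 \<rightarrow> W\<close>, and the witness for \<open>ev\<^sub>0\<close> moves
  along \<open>g\<close> to a witness for \<open>e\<close>.

  Conversely, a weak evaluation \<open>ev : W \<times> A \<rightarrow> B\<close> of \<open>\<C>\<close> becomes one of \<open>\<Q>\<^sub>P\<close> once \<open>W\<close> carries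
  the relation \<open>w \<sim> w' \<equiv> \<forall>a. ev(w, a) = ev(w', a)\<close>: an arrow \<open>h = ev \<circ> (g \<times> id)\<close> preserving the
  relations forces \<open>g\<close> to preserve \<open>\<sim>\<close>. Choice in \<open>\<overline>P\<close> for it is then choice in \<open>P\<close> for \<open>ev\<close>.
\<close>

section \<open>Cartesian categories\<close>

locale cartesian_category =
  fixes C :: "('o,'a) cat"
  assumes arr_objs: "\<forall>f\<in>cArr C. cdom C f \<in> cObj C \<and> ccod C f \<in> cObj C"
    and id_hom: "\<forall>X\<in>cObj C. cid C X \<in> hom C X X"
    and comp_hom: "\<forall>X Y Z f g. f \<in> hom C X Y \<longrightarrow> g \<in> hom C Y Z \<longrightarrow> ccomp C g f \<in> hom C X Z"
    and id_neutral: "\<forall>X Y f. f \<in> hom C X Y \<longrightarrow> ccomp C f (cid C X) = f \<and> ccomp C (cid C Y) f = f"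
    and assoc: "\<forall>f g h. f \<in> cArr C \<longrightarrow> g \<in> cArr C \<longrightarrow> h \<in> cArr C \<longrightarrow>
        ccod C f = cdom C g \<longrightarrow> ccod C g = cdom C h \<longrightarrow>
        ccomp C h (ccomp C g f) = ccomp C (ccomp C h g) f"
    and terminal: "cterm C \<in> cObj C"
    and bang: "\<forall>X\<in>cObj C. cbang C X \<in> hom C X (cterm C) \<and> (\<forall>f\<in>hom C X (cterm C). f = cbang C X)"
    and product: "\<forall>X\<in>cObj C. \<forall>Y\<in>cObj C.
        cprod C X Y \<in> cObj C \<and>
        cpr1 C X Y \<in> hom C (cprod C X Y) X \<and> cpr2 C X Y \<in> hom C (cprod C X Y) Y \<and>
        (\<forall>Z f g. f \<in> hom C Z X \<longrightarrow> g \<in> hom C Z Y \<longrightarrow>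
            cpair C f g \<in> hom C Z (cprod C X Y) \<and>
            ccomp C (cpr1 C X Y) (cpair C f g) = f \<and> ccomp C (cpr2 C X Y) (cpair C f g) = g) \<and>
        (\<forall>Z h. h \<in> hom C Z (cprod C X Y) \<longrightarrow>
            h = cpair C (ccomp C (cpr1 C X Y) h) (ccomp C (cpr2 C X Y) h))"

lemma cartesian_categoryI: "cat_fp C \<Longrightarrow> cartesian_category C"
  unfolding cat_fp_def by unfold_locales (elim conjE; assumption)+

context cartesian_category
begin

lemma arr_dom[simp]: "f \<in> cArr C \<Longrightarrow> cdom C f \<in> cObj C"
  and arr_cod[simp]: "f \<in> cArr C \<Longrightarrow> ccod C f \<in> cObj C"
  using arr_objs by blast+

lemma id_arr[simp]: "X \<in> cObj C \<Longrightarrow> cid C X \<in> cArr C"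
  and id_dom[simp]: "X \<in> cObj C \<Longrightarrow> cdom C (cid C X) = X"
  and id_cod[simp]: "X \<in> cObj C \<Longrightarrow> ccod C (cid C X) = X"
  using id_hom unfolding hom_def by blast+

lemma comp_arr[simp]: "f \<in> cArr C \<Longrightarrow> g \<in> cArr C \<Longrightarrow> ccod C f = cdom C g \<Longrightarrow> ccomp C g f \<in> cArr C"
  and comp_dom[simp]: "f \<in> cArr C \<Longrightarrow> g \<in> cArr C \<Longrightarrow> ccod C f = cdom C g \<Longrightarrow> cdom C (ccomp C g f) = cdom C f"
  and comp_cod[simp]: "f \<in> cArr C \<Longrightarrow> g \<in> cArr C \<Longrightarrow> ccod C f = cdom C g \<Longrightarrow> ccod C (ccomp C g f) = ccod C g"
  using comp_hom[rule_format, of f "cdom C f" "ccod C f" g "ccod C g"] unfolding hom_def by auto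

lemma comp_id_r[simp]: "f \<in> cArr C \<Longrightarrow> X = cdom C f \<Longrightarrow> ccomp C f (cid C X) = f"
  and comp_id_l[simp]: "f \<in> cArr C \<Longrightarrow> Y = ccod C f \<Longrightarrow> ccomp C (cid C Y) f = f"
  using id_neutral unfolding hom_def by blast+

lemma comp_assoc[simp]: "f \<in> cArr C \<Longrightarrow> g \<in> cArr C \<Longrightarrow> h \<in> cArr C \<Longrightarrow>
    ccod C f = cdom C g \<Longrightarrow> ccod C g = cdom C h \<Longrightarrow> ccomp C (ccomp C h g) f = ccomp C h (ccomp C g f)"
  using assoc by simp

lemma term_obj[simp]: "cterm C \<in> cObj C"
  by (rule terminal)

lemma bang_arr[simp]: "X \<in> cObj C \<Longrightarrow> cbang C X \<in> cArr C"
  and bang_dom[simp]: "X \<in> cObj C \<Longrightarrow> cdom C (cbang C X) = X"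
  and bang_cod[simp]: "X \<in> cObj C \<Longrightarrow> ccod C (cbang C X) = cterm C"
  using bang unfolding hom_def by blast+

lemma bang_unique: "f \<in> cArr C \<Longrightarrow> ccod C f = cterm C \<Longrightarrow> f = cbang C (cdom C f)"
  using bang arr_dom unfolding hom_def by blast

lemma bang_comp[simp]: "f \<in> cArr C \<Longrightarrow> Y = ccod C f \<Longrightarrow> ccomp C (cbang C Y) f = cbang C (cdom C f)"
  using bang_unique[of "ccomp C (cbang C Y) f"] by simp

lemma prod_obj[simp]: "X \<in> cObj C \<Longrightarrow> Y \<in> cObj C \<Longrightarrow> cprod C X Y \<in> cObj C"
  using product by blast

lemma pr1_arr[simp]: "X \<in> cObj C \<Longrightarrow> Y \<in> cObj C \<Longrightarrow> cpr1 C X Y \<in> cArr C"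
  and pr1_dom[simp]: "X \<in> cObj C \<Longrightarrow> Y \<in> cObj C \<Longrightarrow> cdom C (cpr1 C X Y) = cprod C X Y"
  and pr1_cod[simp]: "X \<in> cObj C \<Longrightarrow> Y \<in> cObj C \<Longrightarrow> ccod C (cpr1 C X Y) = X"
  and pr2_arr[simp]: "X \<in> cObj C \<Longrightarrow> Y \<in> cObj C \<Longrightarrow> cpr2 C X Y \<in> cArr C"
  and pr2_dom[simp]: "X \<in> cObj C \<Longrightarrow> Y \<in> cObj C \<Longrightarrow> cdom C (cpr2 C X Y) = cprod C X Y"
  and pr2_cod[simp]: "X \<in> cObj C \<Longrightarrow> Y \<in> cObj C \<Longrightarrow> ccod C (cpr2 C X Y) = Y"
  using product unfolding hom_def by blast+

lemma pair_props:
  assumes "f \<in> cArr C" "g \<in> cArr C" "cdom C f = cdom C g"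
  shows "cpair C f g \<in> hom C (cdom C f) (cprod C (ccod C f) (ccod C g))"
    and "ccomp C (cpr1 C (ccod C f) (ccod C g)) (cpair C f g) = f"
    and "ccomp C (cpr2 C (ccod C f) (ccod C g)) (cpair C f g) = g"
proof -
  have "f \<in> hom C (cdom C f) (ccod C f)" "g \<in> hom C (cdom C f) (ccod C g)"
    using assms unfolding hom_def by auto
  moreover have "ccod C f \<in> cObj C" "ccod C g \<in> cObj C"
    using assms by simp_all
  ultimately show "cpair C f g \<in> hom C (cdom C f) (cprod C (ccod C f) (ccod C g))"
    "ccomp C (cpr1 C (ccod C f) (ccod C g)) (cpair C f g) = f"
    "ccomp C (cpr2 C (ccod C f) (ccod C g)) (cpair C f g) = g"
    using product by blast+
qed

lemma pair_arr[simp]: "f \<in> cArr C \<Longrightarrow> g \<in> cArr C \<Longrightarrow> cdom C f = cdom C g \<Longrightarrow> cpair C f g \<in> cArr C"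
  and pair_dom[simp]: "f \<in> cArr C \<Longrightarrow> g \<in> cArr C \<Longrightarrow> cdom C f = cdom C g \<Longrightarrow> cdom C (cpair C f g) = cdom C f"
  and pair_cod[simp]: "f \<in> cArr C \<Longrightarrow> g \<in> cArr C \<Longrightarrow> cdom C f = cdom C g \<Longrightarrow>
    ccod C (cpair C f g) = cprod C (ccod C f) (ccod C g)"
  using pair_props(1)[of f g] unfolding hom_def by auto

lemma pr1_pair[simp]: "f \<in> cArr C \<Longrightarrow> g \<in> cArr C \<Longrightarrow> cdom C f = cdom C g \<Longrightarrow>
    X = ccod C f \<Longrightarrow> Y = ccod C g \<Longrightarrow> ccomp C (cpr1 C X Y) (cpair C f g) = f"
  and pr2_pair[simp]: "f \<in> cArr C \<Longrightarrow> g \<in> cArr C \<Longrightarrow> cdom C f = cdom C g \<Longrightarrow>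
    X = ccod C f \<Longrightarrow> Y = ccod C g \<Longrightarrow> ccomp C (cpr2 C X Y) (cpair C f g) = g"
  using pair_props(2,3)[of f g] by auto

lemma pair_eta[simp]: "h \<in> cArr C \<Longrightarrow> ccod C h = cprod C X Y \<Longrightarrow> X \<in> cObj C \<Longrightarrow> Y \<in> cObj C \<Longrightarrow>
    cpair C (ccomp C (cpr1 C X Y) h) (ccomp C (cpr2 C X Y) h) = h"
proof -
  assume h: "h \<in> cArr C" "ccod C h = cprod C X Y" and XY: "X \<in> cObj C" "Y \<in> cObj C"
  then have "h \<in> hom C (cdom C h) (cprod C X Y)" unfolding hom_def by simp
  then have "h = cpair C (ccomp C (cpr1 C X Y) h) (ccomp C (cpr2 C X Y) h)"
    using product XY by blast
  then show ?thesis by (rule sym)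
qed

lemma pair_pr1_pr2[simp]: "X \<in> cObj C \<Longrightarrow> Y \<in> cObj C \<Longrightarrow> cpair C (cpr1 C X Y) (cpr2 C X Y) = cid C (cprod C X Y)"
  using pair_eta[of "cid C (cprod C X Y)" X Y] by simp

lemma pair_comp[simp]: "f \<in> cArr C \<Longrightarrow> g \<in> cArr C \<Longrightarrow> cdom C f = cdom C g \<Longrightarrow> h \<in> cArr C \<Longrightarrow>
    ccod C h = cdom C f \<Longrightarrow> ccomp C (cpair C f g) h = cpair C (ccomp C f h) (ccomp C g h)"
  using pair_eta[of "ccomp C (cpair C f g) h" "ccod C f" "ccod C g"]
  by (simp flip: comp_assoc)

lemma pr1_terminal: "X \<in> cObj C \<Longrightarrow> cpr1 C (cterm C) X = cbang C (cprod C (cterm C) X)"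
  using bang_unique[of "cpr1 C (cterm C) X"] by simp

end

section \<open>Primary and elementary doctrines\<close>

locale primary_doctrine = cartesian_category C for C :: "('o,'a) cat" +
  fixes D :: "('o,'a,'p) doctrine"
  assumes fibre: "X \<in> cObj C \<Longrightarrow> infsl_fibre D X"
    and dre_hom_Pr: "f \<in> hom C X Y \<Longrightarrow> a \<in> dPr D Y \<Longrightarrow> dre D f a \<in> dPr D X"
    and dre_hom_mono: "f \<in> hom C X Y \<Longrightarrow> a \<in> dPr D Y \<Longrightarrow> b \<in> dPr D Y \<Longrightarrow> dle D Y a b \<Longrightarrow>
      dle D X (dre D f a) (dre D f b)"
    and dre_hom_ptop: "f \<in> hom C X Y \<Longrightarrow> dre D f (ptop D Y) = ptop D X"
    and dre_hom_pmeet: "f \<in> hom C X Y \<Longrightarrow> a \<in> dPr D Y \<Longrightarrow> b \<in> dPr D Y \<Longrightarrow>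
      dre D f (pmeet D Y a b) = pmeet D X (dre D f a) (dre D f b)"
    and dre_id[simp]: "X \<in> cObj C \<Longrightarrow> a \<in> dPr D X \<Longrightarrow> dre D (cid C X) a = a"
    and dre_hom_comp: "f \<in> hom C X Y \<Longrightarrow> g \<in> hom C Y Z \<Longrightarrow> a \<in> dPr D Z \<Longrightarrow>
      dre D (ccomp C g f) a = dre D f (dre D g a)"

lemma primary_doctrineI: "doctrine C D \<Longrightarrow> primary_doctrine C D"
  unfolding doctrine_def
  by (intro primary_doctrine.intro primary_doctrine_axioms.intro; elim conjE) (simp_all add: cartesian_categoryI)

context primary_doctrine
begin

lemma dre_Pr[simp]: "f \<in> cArr C \<Longrightarrow> X = cdom C f \<Longrightarrow> a \<in> dPr D (ccod C f) \<Longrightarrow> dre D f a \<in> dPr D X"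
  using dre_hom_Pr[of f "cdom C f" "ccod C f"] by (simp add: hom_def)

lemma dre_mono: "f \<in> cArr C \<Longrightarrow> a \<in> dPr D (ccod C f) \<Longrightarrow> b \<in> dPr D (ccod C f) \<Longrightarrow>
    dle D (ccod C f) a b \<Longrightarrow> dle D (cdom C f) (dre D f a) (dre D f b)"
  using dre_hom_mono[of f "cdom C f" "ccod C f"] by (simp add: hom_def)

lemma dre_ptop[simp]: "f \<in> cArr C \<Longrightarrow> Y = ccod C f \<Longrightarrow> dre D f (ptop D Y) = ptop D (cdom C f)"
  using dre_hom_ptop[of f "cdom C f" "ccod C f"] by (simp add: hom_def)

lemma dre_pmeet[simp]: "f \<in> cArr C \<Longrightarrow> Y = ccod C f \<Longrightarrow> a \<in> dPr D Y \<Longrightarrow> b \<in> dPr D Y \<Longrightarrow>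
    dre D f (pmeet D Y a b) = pmeet D (cdom C f) (dre D f a) (dre D f b)"
  using dre_hom_pmeet[of f "cdom C f" "ccod C f"] by (simp add: hom_def)

lemma dre_dre[simp]: "f \<in> cArr C \<Longrightarrow> g \<in> cArr C \<Longrightarrow> ccod C f = cdom C g \<Longrightarrow> a \<in> dPr D (ccod C g) \<Longrightarrow>
    dre D f (dre D g a) = dre D (ccomp C g f) a"
  using dre_hom_comp[of f "cdom C f" "ccod C f" g "ccod C g" a] by (simp add: hom_def)

lemma dle_refl[simp]: "X \<in> cObj C \<Longrightarrow> a \<in> dPr D X \<Longrightarrow> dle D X a a"
  using fibre[of X] unfolding infsl_fibre_def by blast

lemma dle_trans: "dle D X a b \<Longrightarrow> dle D X b c \<Longrightarrow>
    X \<in> cObj C \<Longrightarrow> a \<in> dPr D X \<Longrightarrow> b \<in> dPr D X \<Longrightarrow> c \<in> dPr D X \<Longrightarrow> dle D X a c"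
  using fibre[of X] unfolding infsl_fibre_def by blast

lemma dle_antisym: "X \<in> cObj C \<Longrightarrow> a \<in> dPr D X \<Longrightarrow> b \<in> dPr D X \<Longrightarrow>
    dle D X a b \<Longrightarrow> dle D X b a \<Longrightarrow> a = b"
  using fibre[of X] unfolding infsl_fibre_def by blast

lemma ptop_greatest:
  assumes "X \<in> cObj C"
  shows "ptop D X \<in> dPr D X \<and> (\<forall>a\<in>dPr D X. dle D X a (ptop D X))"
proof -
  obtain t where t: "t \<in> dPr D X" "\<forall>a\<in>dPr D X. dle D X a t"
    using fibre[OF assms] unfolding infsl_fibre_def by blast
  have "ptop D X = t"
    unfolding ptop_def by (rule the_equality) (use t dle_antisym[OF assms] in auto)
  then show ?thesis using t by simp
qed

lemma ptop_Pr[simp]: "X \<in> cObj C \<Longrightarrow> ptop D X \<in> dPr D X"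
  and le_ptop[simp]: "X \<in> cObj C \<Longrightarrow> a \<in> dPr D X \<Longrightarrow> dle D X a (ptop D X)"
  using ptop_greatest by blast+

lemma pmeet_glb:
  assumes X: "X \<in> cObj C" and ab: "a \<in> dPr D X" "b \<in> dPr D X"
  shows "pmeet D X a b \<in> dPr D X \<and> (\<forall>x\<in>dPr D X. dle D X x (pmeet D X a b) \<longleftrightarrow> dle D X x a \<and> dle D X x b)"
proof -
  have "\<forall>a\<in>dPr D X. \<forall>b\<in>dPr D X. \<exists>c\<in>dPr D X.
      \<forall>x\<in>dPr D X. dle D X x c \<longleftrightarrow> dle D X x a \<and> dle D X x b"
    using fibre[OF X] unfolding infsl_fibre_def by (elim conjE) assumption
  then obtain c where c: "c \<in> dPr D X" "\<forall>x\<in>dPr D X. dle D X x c \<longleftrightarrow> dle D X x a \<and> dle D X x b"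
    using ab by blast
  have "pmeet D X a b = c"
    unfolding pmeet_def
  proof (rule the_equality)
    fix d assume d: "d \<in> dPr D X \<and> (\<forall>x\<in>dPr D X. dle D X x d \<longleftrightarrow> dle D X x a \<and> dle D X x b)"
    then have "dle D X d c" "dle D X c d" using c dle_refl[OF X] by blast+
    then show "d = c" using dle_antisym[OF X] c d by blast
  qed (use c in auto)
  then show ?thesis using c by simp
qed

lemma pmeet_Pr[simp]: "X \<in> cObj C \<Longrightarrow> a \<in> dPr D X \<Longrightarrow> b \<in> dPr D X \<Longrightarrow> pmeet D X a b \<in> dPr D X"
  and le_pmeet_iff: "X \<in> cObj C \<Longrightarrow> a \<in> dPr D X \<Longrightarrow> b \<in> dPr D X \<Longrightarrow> x \<in> dPr D X \<Longrightarrow>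
    dle D X x (pmeet D X a b) \<longleftrightarrow> dle D X x a \<and> dle D X x b"
  using pmeet_glb by blast+

lemma le_pmeetI: "dle D X x a \<Longrightarrow> dle D X x b \<Longrightarrow>
    X \<in> cObj C \<Longrightarrow> a \<in> dPr D X \<Longrightarrow> b \<in> dPr D X \<Longrightarrow> x \<in> dPr D X \<Longrightarrow> dle D X x (pmeet D X a b)"
  using le_pmeet_iff by blast

lemma pmeet_le1: "X \<in> cObj C \<Longrightarrow> a \<in> dPr D X \<Longrightarrow> b \<in> dPr D X \<Longrightarrow> dle D X (pmeet D X a b) a"
  and pmeet_le2: "X \<in> cObj C \<Longrightarrow> a \<in> dPr D X \<Longrightarrow> b \<in> dPr D X \<Longrightarrow> dle D X (pmeet D X a b) b"
  using le_pmeet_iff[of X a b "pmeet D X a b"] by simp_all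

lemma pmeet_mono: "dle D X a a' \<Longrightarrow> dle D X b b' \<Longrightarrow>
    X \<in> cObj C \<Longrightarrow> a \<in> dPr D X \<Longrightarrow> b \<in> dPr D X \<Longrightarrow> a' \<in> dPr D X \<Longrightarrow> b' \<in> dPr D X \<Longrightarrow>
    dle D X (pmeet D X a b) (pmeet D X a' b')"
  by (meson le_pmeetI dle_trans pmeet_Pr pmeet_le1 pmeet_le2)

lemma le_pmeet_trans: "dle D X x a \<Longrightarrow> dle D X x b \<Longrightarrow> dle D X (pmeet D X a b) c \<Longrightarrow>
    X \<in> cObj C \<Longrightarrow> a \<in> dPr D X \<Longrightarrow> b \<in> dPr D X \<Longrightarrow> c \<in> dPr D X \<Longrightarrow> x \<in> dPr D X \<Longrightarrow> dle D X x c"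
  by (meson le_pmeetI dle_trans pmeet_Pr)

lemma dle_from_ptop: "dle D X (ptop D X) b \<Longrightarrow> X \<in> cObj C \<Longrightarrow> a \<in> dPr D X \<Longrightarrow> b \<in> dPr D X \<Longrightarrow> dle D X a b"
  by (meson dle_trans le_ptop ptop_Pr)

lemma pmeet_pmeet_le:
  assumes X: "X \<in> cObj C" and Pr: "a \<in> dPr D X" "b \<in> dPr D X" "c \<in> dPr D X" "d \<in> dPr D X"
      "e \<in> dPr D X" "f \<in> dPr D X"
    and le: "dle D X (pmeet D X a c) e" "dle D X (pmeet D X b d) f"
  shows "dle D X (pmeet D X (pmeet D X a b) (pmeet D X c d)) (pmeet D X e f)"
proof -
  let ?m = "pmeet D X (pmeet D X a b) (pmeet D X c d)"
  have "dle D X ?m (pmeet D X a b)" "dle D X ?m (pmeet D X c d)"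
    using X Pr by (simp_all add: pmeet_le1 pmeet_le2)
  then have "dle D X ?m a" "dle D X ?m b" "dle D X ?m c" "dle D X ?m d"
    using X Pr by (simp_all add: le_pmeet_iff)
  then have ac: "dle D X ?m (pmeet D X a c)" and bd: "dle D X ?m (pmeet D X b d)"
    using X Pr by (simp_all add: le_pmeet_iff)
  have "dle D X ?m e" "dle D X ?m f"
    using dle_trans[OF ac le(1)] dle_trans[OF bd le(2)] X Pr by simp_all
  then show ?thesis
    using X Pr by (simp add: le_pmeet_iff)
qed

end

locale elementary_doctrine = primary_doctrine C D
  for C :: "('o,'a) cat" and D :: "('o,'a,'p) doctrine" +
  assumes deq_Pr[simp]: "A \<in> cObj C \<Longrightarrow> deq D A \<in> dPr D (cprod C A A)"
    and deq_adjunction: "X \<in> cObj C \<Longrightarrow> A \<in> cObj C \<Longrightarrow> \<alpha> \<in> dPr D (cprod C X A) \<Longrightarrow>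
      \<beta> \<in> dPr D (cprod C (cprod C X A) A) \<Longrightarrow>
      dle D (cprod C (cprod C X A) A) (pmeet D (cprod C (cprod C X A) A) (dre D (cpr1 C (cprod C X A) A) \<alpha>)
         (dre D (cpair C (ccomp C (cpr2 C X A) (cpr1 C (cprod C X A) A)) (cpr2 C (cprod C X A) A)) (deq D A))) \<beta>
      \<longleftrightarrow> dle D (cprod C X A) \<alpha> (dre D (cpair C (cid C (cprod C X A)) (cpr2 C X A)) \<beta>)"

lemma elementary_doctrineI: "elementary C D \<Longrightarrow> elementary_doctrine C D"
  unfolding elementary_def Let_def
  by (intro elementary_doctrine.intro elementary_doctrine_axioms.intro; elim conjE)
     (simp_all add: primary_doctrineI)

context elementary_doctrine
begin

text \<open>\<open>\<phi>(u, y) \<and> y = y' \<turnstile> \<phi>(u, y')\<close>: the unit of the adjunction, reindexed along \<open>((u, y), y')\<close>.\<close>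
lemma deq_subst:
  assumes U: "U \<in> cObj C" and Y: "Y \<in> cObj C" and \<phi>: "\<phi> \<in> dPr D (cprod C U Y)"
    and arrs: "u \<in> cArr C" "y \<in> cArr C" "y' \<in> cArr C" "cdom C y = cdom C u" "cdom C y' = cdom C u"
      "ccod C u = U" "ccod C y = Y" "ccod C y' = Y"
  shows "dle D (cdom C u) (pmeet D (cdom C u) (dre D (cpair C u y) \<phi>) (dre D (cpair C y y') (deq D Y)))
    (dre D (cpair C u y') \<phi>)"
proof -
  let ?UY = "cprod C U Y"
  let ?m = "cpair C (cpair C u y) y'"
  have unit: "dle D (cprod C ?UY Y) (pmeet D (cprod C ?UY Y) (dre D (cpr1 C ?UY Y) \<phi>)
       (dre D (cpair C (ccomp C (cpr2 C U Y) (cpr1 C ?UY Y)) (cpr2 C ?UY Y)) (deq D Y)))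
     (dre D (cpair C (ccomp C (cpr1 C U Y) (cpr1 C ?UY Y)) (cpr2 C ?UY Y)) \<phi>)"
    using U Y \<phi> by (subst deq_adjunction) simp_all
  have "dle D (cdom C ?m) (dre D ?m (pmeet D (cprod C ?UY Y) (dre D (cpr1 C ?UY Y) \<phi>)
       (dre D (cpair C (ccomp C (cpr2 C U Y) (cpr1 C ?UY Y)) (cpr2 C ?UY Y)) (deq D Y))))
     (dre D ?m (dre D (cpair C (ccomp C (cpr1 C U Y) (cpr1 C ?UY Y)) (cpr2 C ?UY Y)) \<phi>))"
    by (rule dre_mono) (use U Y \<phi> arrs unit in simp_all)
  then show ?thesis using U Y \<phi> arrs by simp
qed

lemma deq_refl_id: "A \<in> cObj C \<Longrightarrow> dle D A (ptop D A) (dre D (cpair C (cid C A) (cid C A)) (deq D A))"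
proof -
  assume A: "A \<in> cObj C"
  let ?T = "cterm C"
  let ?TA = "cprod C ?T A"
  have "dle D ?TA (ptop D ?TA)
      (dre D (cpair C (cid C ?TA) (cpr2 C ?T A))
        (dre D (cpair C (ccomp C (cpr2 C ?T A) (cpr1 C ?TA A)) (cpr2 C ?TA A)) (deq D A)))"
    by (subst deq_adjunction[symmetric]) (use A in \<open>simp_all add: pmeet_le2\<close>)
  then have diag: "dle D ?TA (ptop D ?TA) (dre D (cpair C (cpr2 C ?T A) (cpr2 C ?T A)) (deq D A))"
    using A by simp
  let ?n = "cpair C (cbang C A) (cid C A)"
  have "dle D (cdom C ?n) (dre D ?n (ptop D ?TA)) (dre D ?n (dre D (cpair C (cpr2 C ?T A) (cpr2 C ?T A)) (deq D A)))"
    by (rule dre_mono) (use A diag in simp_all)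
  then show ?thesis using A by simp
qed

lemma deq_refl: "y \<in> cArr C \<Longrightarrow> Y = ccod C y \<Longrightarrow> dle D (cdom C y) (ptop D (cdom C y)) (dre D (cpair C y y) (deq D Y))"
proof -
  assume y: "y \<in> cArr C" "Y = ccod C y"
  have "dle D (cdom C y) (dre D y (ptop D Y)) (dre D y (dre D (cpair C (cid C Y) (cid C Y)) (deq D Y)))"
    by (rule dre_mono) (use y deq_refl_id[of Y] in simp_all)
  then show ?thesis using y by simp
qed

lemma deq_sym:
  assumes y: "y \<in> cArr C" "y' \<in> cArr C" "cdom C y' = cdom C y" "ccod C y = Y" "ccod C y' = Y"
  shows "dle D (cdom C y) (dre D (cpair C y y') (deq D Y)) (dre D (cpair C y' y) (deq D Y))"
proof -
  let ?X = "cdom C y"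
  have Y: "Y \<in> cObj C" using y by auto
  let ?\<phi> = "dre D (cpair C (cpr2 C Y Y) (cpr1 C Y Y)) (deq D Y)"
  have subst: "dle D ?X (pmeet D ?X (dre D (cpair C y y) (deq D Y)) (dre D (cpair C y y') (deq D Y)))
      (dre D (cpair C y' y) (deq D Y))"
    using deq_subst[of Y Y ?\<phi> y y y'] y Y by simp
  have le: "dle D ?X (dre D (cpair C y y') (deq D Y)) (dre D (cpair C y y) (deq D Y))"
    by (rule dle_from_ptop[OF deq_refl[of y Y]]) (use y Y in simp_all)
  show ?thesis
    by (rule le_pmeet_trans[OF le dle_refl subst]) (use y Y in simp_all)
qed

lemma deq_trans: "y1 \<in> cArr C \<Longrightarrow> y2 \<in> cArr C \<Longrightarrow> y3 \<in> cArr C \<Longrightarrow> cdom C y2 = cdom C y1 \<Longrightarrow>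
    cdom C y3 = cdom C y1 \<Longrightarrow> ccod C y1 = Y \<Longrightarrow> ccod C y2 = Y \<Longrightarrow> ccod C y3 = Y \<Longrightarrow>
  dle D (cdom C y1) (pmeet D (cdom C y1) (dre D (cpair C y1 y2) (deq D Y)) (dre D (cpair C y2 y3) (deq D Y)))
     (dre D (cpair C y1 y3) (deq D Y))"
  by (rule deq_subst) auto

end

section \<open>Equivalence relations and descent\<close>

context primary_doctrine
begin

lemma per_equiv_Pr: "per_equiv C D A \<rho> \<Longrightarrow> \<rho> \<in> dPr D (cprod C A A)"
  unfolding per_equiv_def by simp

lemma per_equiv_refl:
  assumes \<rho>: "per_equiv C D A \<rho>" and y: "y \<in> cArr C" "ccod C y = A"
  shows "dle D (cdom C y) (ptop D (cdom C y)) (dre D (cpair C y y) \<rho>)"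
proof -
  have A: "A \<in> cObj C" using y by auto
  have r: "\<rho> \<in> dPr D (cprod C A A)" "dle D A (ptop D A) (dre D (cpair C (cid C A) (cid C A)) \<rho>)"
    using \<rho> unfolding per_equiv_def by auto
  have "dle D (cdom C y) (dre D y (ptop D A)) (dre D y (dre D (cpair C (cid C A) (cid C A)) \<rho>))"
    by (rule dre_mono) (use A y r in simp_all)
  then show ?thesis using A y r by simp
qed

lemma per_equiv_sym:
  assumes \<rho>: "per_equiv C D A \<rho>"
    and y: "y \<in> cArr C" "y' \<in> cArr C" "cdom C y' = cdom C y" "ccod C y = A" "ccod C y' = A"
  shows "dle D (cdom C y) (dre D (cpair C y y') \<rho>) (dre D (cpair C y' y) \<rho>)"
proof -
  have A: "A \<in> cObj C" using y by auto
  have r: "\<rho> \<in> dPr D (cprod C A A)" "dle D (cprod C A A) \<rho> (dre D (cpair C (cpr2 C A A) (cpr1 C A A)) \<rho>)"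
    using \<rho> unfolding per_equiv_def by auto
  have "dle D (cdom C (cpair C y y')) (dre D (cpair C y y') \<rho>)
      (dre D (cpair C y y') (dre D (cpair C (cpr2 C A A) (cpr1 C A A)) \<rho>))"
    by (rule dre_mono) (use A y r in simp_all)
  then show ?thesis using A y r by simp
qed

lemma per_equiv_trans:
  assumes \<rho>: "per_equiv C D A \<rho>"
    and y: "y1 \<in> cArr C" "y2 \<in> cArr C" "y3 \<in> cArr C" "cdom C y2 = cdom C y1" "cdom C y3 = cdom C y1"
      "ccod C y1 = A" "ccod C y2 = A" "ccod C y3 = A"
  shows "dle D (cdom C y1) (pmeet D (cdom C y1) (dre D (cpair C y1 y2) \<rho>) (dre D (cpair C y2 y3) \<rho>))
    (dre D (cpair C y1 y3) \<rho>)"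
proof -
  have A: "A \<in> cObj C" using y by auto
  let ?AA = "cprod C A A"
  let ?AAA = "cprod C ?AA A"
  let ?p1 = "ccomp C (cpr1 C A A) (cpr1 C ?AA A)" and ?p2 = "ccomp C (cpr2 C A A) (cpr1 C ?AA A)"
    and ?p3 = "cpr2 C ?AA A"
  have r: "\<rho> \<in> dPr D ?AA" "dle D ?AAA (pmeet D ?AAA (dre D (cpair C ?p1 ?p2) \<rho>) (dre D (cpair C ?p2 ?p3) \<rho>))
      (dre D (cpair C ?p1 ?p3) \<rho>)"
    using \<rho> unfolding per_equiv_def Let_def by auto
  let ?m = "cpair C (cpair C y1 y2) y3"
  have "dle D (cdom C ?m) (dre D ?m (pmeet D ?AAA (dre D (cpair C ?p1 ?p2) \<rho>) (dre D (cpair C ?p2 ?p3) \<rho>)))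
      (dre D ?m (dre D (cpair C ?p1 ?p3) \<rho>))"
    by (rule dre_mono) (use A y r in simp_all)
  then show ?thesis using A y r by simp
qed

lemma per_equivI:
  assumes A: "A \<in> cObj C" and \<rho>: "\<rho> \<in> dPr D (cprod C A A)"
    and refl: "\<And>y. y \<in> cArr C \<Longrightarrow> ccod C y = A \<Longrightarrow>
      dle D (cdom C y) (ptop D (cdom C y)) (dre D (cpair C y y) \<rho>)"
    and sym: "\<And>y y'. y \<in> cArr C \<Longrightarrow> y' \<in> cArr C \<Longrightarrow> cdom C y' = cdom C y \<Longrightarrow> ccod C y = A \<Longrightarrow>
      ccod C y' = A \<Longrightarrow> dle D (cdom C y) (dre D (cpair C y y') \<rho>) (dre D (cpair C y' y) \<rho>)"
    and trans: "\<And>y1 y2 y3. y1 \<in> cArr C \<Longrightarrow> y2 \<in> cArr C \<Longrightarrow> y3 \<in> cArr C \<Longrightarrow>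
      cdom C y2 = cdom C y1 \<Longrightarrow> cdom C y3 = cdom C y1 \<Longrightarrow> ccod C y1 = A \<Longrightarrow> ccod C y2 = A \<Longrightarrow> ccod C y3 = A \<Longrightarrow>
      dle D (cdom C y1) (pmeet D (cdom C y1) (dre D (cpair C y1 y2) \<rho>) (dre D (cpair C y2 y3) \<rho>))
        (dre D (cpair C y1 y3) \<rho>)"
  shows "per_equiv C D A \<rho>"
proof -
  let ?AA = "cprod C A A"
  let ?AAA = "cprod C ?AA A"
  have "dle D A (ptop D A) (dre D (cpair C (cid C A) (cid C A)) \<rho>)"
    using refl[of "cid C A"] A by simp
  moreover have "dle D ?AA \<rho> (dre D (cpair C (cpr2 C A A) (cpr1 C A A)) \<rho>)"
    using sym[of "cpr1 C A A" "cpr2 C A A"] A \<rho> by simp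
  moreover have "dle D ?AAA (pmeet D ?AAA
      (dre D (cpair C (ccomp C (cpr1 C A A) (cpr1 C ?AA A)) (ccomp C (cpr2 C A A) (cpr1 C ?AA A))) \<rho>)
      (dre D (cpair C (ccomp C (cpr2 C A A) (cpr1 C ?AA A)) (cpr2 C ?AA A)) \<rho>))
     (dre D (cpair C (ccomp C (cpr1 C A A) (cpr1 C ?AA A)) (cpr2 C ?AA A)) \<rho>)"
    using trans[of "ccomp C (cpr1 C A A) (cpr1 C ?AA A)" "ccomp C (cpr2 C A A) (cpr1 C ?AA A)" "cpr2 C ?AA A"] A \<rho>
    by simp
  ultimately show ?thesis unfolding per_equiv_def Let_def using \<rho> by simp
qed

lemma qprodrel_Pr[simp]: "A \<in> cObj C \<Longrightarrow> B \<in> cObj C \<Longrightarrow> \<rho> \<in> dPr D (cprod C A A) \<Longrightarrow>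
    \<sigma> \<in> dPr D (cprod C B B) \<Longrightarrow> qprodrel C D A B \<rho> \<sigma> \<in> dPr D (cprod C (cprod C A B) (cprod C A B))"
  unfolding qprodrel_def Let_def ptimes_def by simp

lemma dre_qprodrel: "A \<in> cObj C \<Longrightarrow> B \<in> cObj C \<Longrightarrow> \<rho> \<in> dPr D (cprod C A A) \<Longrightarrow> \<sigma> \<in> dPr D (cprod C B B) \<Longrightarrow>
    x \<in> cArr C \<Longrightarrow> x' \<in> cArr C \<Longrightarrow> cdom C x' = cdom C x \<Longrightarrow> ccod C x = cprod C A B \<Longrightarrow> ccod C x' = cprod C A B \<Longrightarrow>
  dre D (cpair C x x') (qprodrel C D A B \<rho> \<sigma>) = pmeet D (cdom C x)
    (dre D (cpair C (ccomp C (cpr1 C A B) x) (ccomp C (cpr1 C A B) x')) \<rho>)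
    (dre D (cpair C (ccomp C (cpr2 C A B) x) (ccomp C (cpr2 C A B) x')) \<sigma>)"
  unfolding qprodrel_def Let_def ptimes_def by simp

lemma per_equiv_qprodrel:
  assumes A: "A \<in> cObj C" and B: "B \<in> cObj C" and \<rho>: "per_equiv C D A \<rho>" and \<sigma>: "per_equiv C D B \<sigma>"
  shows "per_equiv C D (cprod C A B) (qprodrel C D A B \<rho> \<sigma>)"
proof -
  note Pr = per_equiv_Pr[OF \<rho>] per_equiv_Pr[OF \<sigma>]
  let ?p = "cpr1 C A B" and ?q = "cpr2 C A B"
  show ?thesis
  proof (rule per_equivI)
    fix y assume y: "y \<in> cArr C" "ccod C y = cprod C A B"
    show "dle D (cdom C y) (ptop D (cdom C y)) (dre D (cpair C y y) (qprodrel C D A B \<rho> \<sigma>))"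
      using y A B Pr per_equiv_refl[OF \<rho>, of "ccomp C ?p y"] per_equiv_refl[OF \<sigma>, of "ccomp C ?q y"]
      by (simp add: dre_qprodrel le_pmeetI)
  next
    fix y y' assume y: "y \<in> cArr C" "y' \<in> cArr C" "cdom C y' = cdom C y" "ccod C y = cprod C A B"
      "ccod C y' = cprod C A B"
    show "dle D (cdom C y) (dre D (cpair C y y') (qprodrel C D A B \<rho> \<sigma>)) (dre D (cpair C y' y) (qprodrel C D A B \<rho> \<sigma>))"
      using y A B Pr per_equiv_sym[OF \<rho>, of "ccomp C ?p y" "ccomp C ?p y'"]
        per_equiv_sym[OF \<sigma>, of "ccomp C ?q y" "ccomp C ?q y'"]
      by (simp add: dre_qprodrel pmeet_mono)
  next
    fix y1 y2 y3 assume y: "y1 \<in> cArr C" "y2 \<in> cArr C" "y3 \<in> cArr C" "cdom C y2 = cdom C y1"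
      "cdom C y3 = cdom C y1" "ccod C y1 = cprod C A B" "ccod C y2 = cprod C A B" "ccod C y3 = cprod C A B"
    show "dle D (cdom C y1) (pmeet D (cdom C y1) (dre D (cpair C y1 y2) (qprodrel C D A B \<rho> \<sigma>))
        (dre D (cpair C y2 y3) (qprodrel C D A B \<rho> \<sigma>))) (dre D (cpair C y1 y3) (qprodrel C D A B \<rho> \<sigma>))"
      using y A B Pr per_equiv_trans[OF \<rho>, of "ccomp C ?p y1" "ccomp C ?p y2" "ccomp C ?p y3"]
        per_equiv_trans[OF \<sigma>, of "ccomp C ?q y1" "ccomp C ?q y2" "ccomp C ?q y3"]
      by (simp add: dre_qprodrel pmeet_pmeet_le)
  qed (use A B Pr in simp_all)
qed

text \<open>The predicates of \<open>\<overline>P(A, \<rho>)\<close>: those \<open>\<alpha>\<close> with \<open>\<alpha>(a) \<and> \<rho>(a, a') \<turnstile> \<alpha>(a')\<close>.\<close>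
definition descent :: "'o \<Rightarrow> 'p \<Rightarrow> 'p \<Rightarrow> bool" where
  "descent A \<rho> \<alpha> \<longleftrightarrow> \<alpha> \<in> dPr D A \<and>
     dle D (cprod C A A) (pmeet D (cprod C A A) (dre D (cpr1 C A A) \<alpha>) \<rho>) (dre D (cpr2 C A A) \<alpha>)"

lemma descent_Pr: "descent A \<rho> \<alpha> \<Longrightarrow> \<alpha> \<in> dPr D A"
  unfolding descent_def by simp

lemma descent_at:
  assumes \<alpha>: "descent A \<rho> \<alpha>" and \<rho>: "\<rho> \<in> dPr D (cprod C A A)"
    and y: "y \<in> cArr C" "y' \<in> cArr C" "cdom C y' = cdom C y" "ccod C y = A" "ccod C y' = A"
  shows "dle D (cdom C y) (pmeet D (cdom C y) (dre D y \<alpha>) (dre D (cpair C y y') \<rho>)) (dre D y' \<alpha>)"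
proof -
  have A: "A \<in> cObj C" using y by auto
  have d: "\<alpha> \<in> dPr D A" "dle D (cprod C A A) (pmeet D (cprod C A A) (dre D (cpr1 C A A) \<alpha>) \<rho>) (dre D (cpr2 C A A) \<alpha>)"
    using \<alpha> unfolding descent_def by auto
  have "dle D (cdom C (cpair C y y')) (dre D (cpair C y y') (pmeet D (cprod C A A) (dre D (cpr1 C A A) \<alpha>) \<rho>))
     (dre D (cpair C y y') (dre D (cpr2 C A A) \<alpha>))"
    by (rule dre_mono) (use A y \<rho> d in simp_all)
  then show ?thesis using A y \<rho> d by simp
qed

lemma descent_antimono:
  assumes A: "A \<in> cObj C" and Pr: "\<rho> \<in> dPr D (cprod C A A)" "\<rho>' \<in> dPr D (cprod C A A)"
    and le: "dle D (cprod C A A) \<rho> \<rho>'" and \<alpha>: "descent A \<rho>' \<alpha>"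
  shows "descent A \<rho> \<alpha>"
proof -
  let ?AA = "cprod C A A"
  have \<alpha>Pr: "\<alpha> \<in> dPr D A" using descent_Pr[OF \<alpha>] .
  have "dle D ?AA (pmeet D ?AA (dre D (cpr1 C A A) \<alpha>) \<rho>) (pmeet D ?AA (dre D (cpr1 C A A) \<alpha>) \<rho>')"
    by (rule pmeet_mono[OF dle_refl le]) (use A Pr \<alpha>Pr in simp_all)
  moreover have "dle D ?AA (pmeet D ?AA (dre D (cpr1 C A A) \<alpha>) \<rho>') (dre D (cpr2 C A A) \<alpha>)"
    using \<alpha> unfolding descent_def by simp
  ultimately have "dle D ?AA (pmeet D ?AA (dre D (cpr1 C A A) \<alpha>) \<rho>) (dre D (cpr2 C A A) \<alpha>)"
    by (rule dle_trans) (use A Pr \<alpha>Pr in simp_all)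
  then show ?thesis unfolding descent_def using \<alpha>Pr by simp
qed

end

context elementary_doctrine
begin

lemma per_equiv_deq: "A \<in> cObj C \<Longrightarrow> per_equiv C D A (deq D A)"
  by (rule per_equivI) (auto intro: deq_refl deq_sym deq_trans)

lemma descent_deq:
  assumes A: "A \<in> cObj C" and \<alpha>: "\<alpha> \<in> dPr D A"
  shows "descent A (deq D A) \<alpha>"
proof -
  let ?AA = "cprod C A A"
  have "dle D (cdom C (cbang C ?AA))
      (pmeet D (cdom C (cbang C ?AA)) (dre D (cpair C (cbang C ?AA) (cpr1 C A A)) (dre D (cpr2 C (cterm C) A) \<alpha>))
        (dre D (cpair C (cpr1 C A A) (cpr2 C A A)) (deq D A)))
      (dre D (cpair C (cbang C ?AA) (cpr2 C A A)) (dre D (cpr2 C (cterm C) A) \<alpha>))"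
    by (rule deq_subst) (use A \<alpha> in simp_all)
  then show ?thesis using A \<alpha> unfolding descent_def by simp
qed

end

section \<open>Quantifiers\<close>

lemma exL_eqI:
  assumes refl: "\<And>x. x \<in> dPr D (ccod C f) \<Longrightarrow> dle D (ccod C f) x x"
    and antisym: "\<And>x y. x \<in> dPr D (ccod C f) \<Longrightarrow> y \<in> dPr D (ccod C f) \<Longrightarrow>
      dle D (ccod C f) x y \<Longrightarrow> dle D (ccod C f) y x \<Longrightarrow> x = y"
    and \<beta>: "\<beta> \<in> dPr D (ccod C f)"
      "\<forall>\<gamma>\<in>dPr D (ccod C f). dle D (ccod C f) \<beta> \<gamma> \<longleftrightarrow> dle D (cdom C f) \<alpha> (dre D f \<gamma>)"
  shows "exL C D f \<alpha> = \<beta>"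
  unfolding exL_def
proof (rule the_equality)
  fix b assume b: "b \<in> dPr D (ccod C f) \<and>
    (\<forall>\<gamma>\<in>dPr D (ccod C f). dle D (ccod C f) b \<gamma> \<longleftrightarrow> dle D (cdom C f) \<alpha> (dre D f \<gamma>))"
  then have "dle D (ccod C f) b \<beta>" "dle D (ccod C f) \<beta> b" using \<beta> refl by blast+
  then show "b = \<beta>" using antisym \<beta> b by blast
qed (use \<beta> in auto)

lemma allL_eqI:
  assumes refl: "\<And>x. x \<in> dPr D (ccod C f) \<Longrightarrow> dle D (ccod C f) x x"
    and antisym: "\<And>x y. x \<in> dPr D (ccod C f) \<Longrightarrow> y \<in> dPr D (ccod C f) \<Longrightarrow>
      dle D (ccod C f) x y \<Longrightarrow> dle D (ccod C f) y x \<Longrightarrow> x = y"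
    and \<beta>: "\<beta> \<in> dPr D (ccod C f)"
      "\<forall>\<gamma>\<in>dPr D (ccod C f). dle D (ccod C f) \<gamma> \<beta> \<longleftrightarrow> dle D (cdom C f) (dre D f \<gamma>) \<alpha>"
  shows "allL C D f \<alpha> = \<beta>"
  unfolding allL_def
proof (rule the_equality)
  fix b assume b: "b \<in> dPr D (ccod C f) \<and>
    (\<forall>\<gamma>\<in>dPr D (ccod C f). dle D (ccod C f) \<gamma> b \<longleftrightarrow> dle D (cdom C f) (dre D f \<gamma>) \<alpha>)"
  then have "dle D (ccod C f) b \<beta>" "dle D (ccod C f) \<beta> b" using \<beta> refl by blast+
  then show "b = \<beta>" using antisym \<beta> b by blast
qed (use \<beta> in auto)

context primary_doctrine
begin

lemma exL_adjoint:
  assumes f: "f \<in> cArr C" "has_exL C D f" and \<alpha>: "\<alpha> \<in> dPr D (cdom C f)"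
  shows "exL C D f \<alpha> \<in> dPr D (ccod C f) \<and>
    (\<forall>\<gamma>\<in>dPr D (ccod C f). dle D (ccod C f) (exL C D f \<alpha>) \<gamma> \<longleftrightarrow> dle D (cdom C f) \<alpha> (dre D f \<gamma>))"
proof -
  obtain \<beta> where \<beta>: "\<beta> \<in> dPr D (ccod C f)"
    "\<forall>\<gamma>\<in>dPr D (ccod C f). dle D (ccod C f) \<beta> \<gamma> \<longleftrightarrow> dle D (cdom C f) \<alpha> (dre D f \<gamma>)"
    using f \<alpha> unfolding has_exL_def by blast
  have "exL C D f \<alpha> = \<beta>"
    by (rule exL_eqI) (use f \<beta> dle_antisym[of "ccod C f"] in auto)
  then show ?thesis using \<beta> by simp
qed

lemma allL_adjoint:
  assumes f: "f \<in> cArr C" "has_allL C D f" and \<alpha>: "\<alpha> \<in> dPr D (cdom C f)"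
  shows "allL C D f \<alpha> \<in> dPr D (ccod C f) \<and>
    (\<forall>\<gamma>\<in>dPr D (ccod C f). dle D (ccod C f) \<gamma> (allL C D f \<alpha>) \<longleftrightarrow> dle D (cdom C f) (dre D f \<gamma>) \<alpha>)"
proof -
  obtain \<beta> where \<beta>: "\<beta> \<in> dPr D (ccod C f)"
    "\<forall>\<gamma>\<in>dPr D (ccod C f). dle D (ccod C f) \<gamma> \<beta> \<longleftrightarrow> dle D (cdom C f) (dre D f \<gamma>) \<alpha>"
    using f \<alpha> unfolding has_allL_def by blast
  have "allL C D f \<alpha> = \<beta>"
    by (rule allL_eqI) (use f \<beta> dle_antisym[of "ccod C f"] in auto)
  then show ?thesis using \<beta> by simp
qed

end

locale quantified_doctrine = elementary_doctrine C D
  for C :: "('o,'a) cat" and D :: "('o,'a,'p) doctrine" +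
  assumes weakly_cc: "weakly_cc C"
    and pr1_has_exL: "X \<in> cObj C \<Longrightarrow> Y \<in> cObj C \<Longrightarrow> has_exL C D (cpr1 C X Y)"
    and pr1_has_allL: "X \<in> cObj C \<Longrightarrow> Y \<in> cObj C \<Longrightarrow> has_allL C D (cpr1 C X Y)"
    and allL_pr1_Beck_Chevalley: "X \<in> cObj C \<Longrightarrow> Y \<in> cObj C \<Longrightarrow> f \<in> hom C Z X \<Longrightarrow>
      \<alpha> \<in> dPr D (cprod C X Y) \<Longrightarrow>
      dre D f (allL C D (cpr1 C X Y) \<alpha>) = allL C D (cpr1 C Z Y) (dre D (ptimes C Z Y f (cid C Y)) \<alpha>)"

lemma quantified_doctrineI: "weak_hyperdoctrine C D \<Longrightarrow> quantified_doctrine C D"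
  unfolding weak_hyperdoctrine_def
  by (intro quantified_doctrine.intro quantified_doctrine_axioms.intro; elim conjE)
     (simp_all add: elementary_doctrineI)

context quantified_doctrine
begin

lemma exL_pr1_adjoint: "X \<in> cObj C \<Longrightarrow> Y \<in> cObj C \<Longrightarrow> \<alpha> \<in> dPr D (cprod C X Y) \<Longrightarrow>
    exL C D (cpr1 C X Y) \<alpha> \<in> dPr D X \<and> (\<forall>\<gamma>\<in>dPr D X.
      dle D X (exL C D (cpr1 C X Y) \<alpha>) \<gamma> \<longleftrightarrow> dle D (cprod C X Y) \<alpha> (dre D (cpr1 C X Y) \<gamma>))"
  using exL_adjoint[of "cpr1 C X Y" \<alpha>] pr1_has_exL[of X Y] by simp

lemma allL_pr1_adjoint: "X \<in> cObj C \<Longrightarrow> Y \<in> cObj C \<Longrightarrow> \<alpha> \<in> dPr D (cprod C X Y) \<Longrightarrow>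
    allL C D (cpr1 C X Y) \<alpha> \<in> dPr D X \<and> (\<forall>\<gamma>\<in>dPr D X.
      dle D X \<gamma> (allL C D (cpr1 C X Y) \<alpha>) \<longleftrightarrow> dle D (cprod C X Y) (dre D (cpr1 C X Y) \<gamma>) \<alpha>)"
  using allL_adjoint[of "cpr1 C X Y" \<alpha>] pr1_has_allL[of X Y] by simp

lemma exL_pr1_Pr[simp]: "X \<in> cObj C \<Longrightarrow> Y \<in> cObj C \<Longrightarrow> \<alpha> \<in> dPr D (cprod C X Y) \<Longrightarrow>
    exL C D (cpr1 C X Y) \<alpha> \<in> dPr D X"
  and allL_pr1_Pr[simp]: "X \<in> cObj C \<Longrightarrow> Y \<in> cObj C \<Longrightarrow> \<alpha> \<in> dPr D (cprod C X Y) \<Longrightarrow>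
    allL C D (cpr1 C X Y) \<alpha> \<in> dPr D X"
  using exL_pr1_adjoint allL_pr1_adjoint by blast+

lemma dre_allL_pr1: "X \<in> cObj C \<Longrightarrow> Y \<in> cObj C \<Longrightarrow> f \<in> cArr C \<Longrightarrow> ccod C f = X \<Longrightarrow>
    \<alpha> \<in> dPr D (cprod C X Y) \<Longrightarrow>
  dre D f (allL C D (cpr1 C X Y) \<alpha>) = allL C D (cpr1 C (cdom C f) Y)
    (dre D (cpair C (ccomp C f (cpr1 C (cdom C f) Y)) (cpr2 C (cdom C f) Y)) \<alpha>)"
  using allL_pr1_Beck_Chevalley[of X Y f "cdom C f" \<alpha>] by (simp add: hom_def ptimes_def)

lemma allL_pr1_elim:
  assumes U: "U \<in> cObj C" and A: "A \<in> cObj C" and \<Phi>: "\<Phi> \<in> dPr D (cprod C U A)"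
    and arrs: "u \<in> cArr C" "a \<in> cArr C" "cdom C a = cdom C u" "ccod C u = U" "ccod C a = A"
  shows "dle D (cdom C u) (dre D u (allL C D (cpr1 C U A) \<Phi>)) (dre D (cpair C u a) \<Phi>)"
proof -
  have counit: "dle D (cprod C U A) (dre D (cpr1 C U A) (allL C D (cpr1 C U A) \<Phi>)) \<Phi>"
    using allL_pr1_adjoint[OF U A \<Phi>] dle_refl[OF U allL_pr1_Pr[OF U A \<Phi>]] by blast
  have "dle D (cdom C (cpair C u a)) (dre D (cpair C u a) (dre D (cpr1 C U A) (allL C D (cpr1 C U A) \<Phi>)))
      (dre D (cpair C u a) \<Phi>)"
    by (rule dre_mono) (use U A \<Phi> arrs counit in simp_all)
  then show ?thesis using U A \<Phi> arrs by simp
qed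

lemma allL_pr1_intro:
  assumes U: "U \<in> cObj C" and A: "A \<in> cObj C" and \<Phi>: "\<Phi> \<in> dPr D (cprod C U A)"
    and u: "u \<in> cArr C" "ccod C u = U" and \<psi>: "\<psi> \<in> dPr D (cdom C u)"
    and le: "dle D (cprod C (cdom C u) A) (dre D (cpr1 C (cdom C u) A) \<psi>)
      (dre D (cpair C (ccomp C u (cpr1 C (cdom C u) A)) (cpr2 C (cdom C u) A)) \<Phi>)"
  shows "dle D (cdom C u) \<psi> (dre D u (allL C D (cpr1 C U A) \<Phi>))"
  using dre_allL_pr1[OF U A u \<Phi>] allL_pr1_adjoint[of "cdom C u" A
      "dre D (cpair C (ccomp C u (cpr1 C (cdom C u) A)) (cpr2 C (cdom C u) A)) \<Phi>"] U A \<Phi> u \<psi> le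
  by simp

text \<open>Quantifying along \<open>X \<rightarrow> 1\<close> is quantifying along the projection \<open>1 \<times> X \<rightarrow> 1\<close>.\<close>

lemma exL_bang_adjoint:
  assumes X: "X \<in> cObj C" and \<alpha>: "\<alpha> \<in> dPr D X"
  shows "exL C D (cbang C X) \<alpha> \<in> dPr D (cterm C) \<and> (\<forall>\<gamma>\<in>dPr D (cterm C).
    dle D (cterm C) (exL C D (cbang C X) \<alpha>) \<gamma> \<longleftrightarrow> dle D X \<alpha> (dre D (cbang C X) \<gamma>))"
proof -
  let ?T = "cterm C"
  let ?\<beta> = "exL C D (cpr1 C ?T X) (dre D (cpr2 C ?T X) \<alpha>)"
  have adj: "?\<beta> \<in> dPr D ?T" "\<forall>\<gamma>\<in>dPr D ?T. dle D ?T ?\<beta> \<gamma> \<longleftrightarrow>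
      dle D (cprod C ?T X) (dre D (cpr2 C ?T X) \<alpha>) (dre D (cpr1 C ?T X) \<gamma>)"
    using exL_pr1_adjoint[of ?T X "dre D (cpr2 C ?T X) \<alpha>"] X \<alpha> by simp_all
  have iff: "dle D ?T ?\<beta> \<gamma> \<longleftrightarrow> dle D X \<alpha> (dre D (cbang C X) \<gamma>)" if \<gamma>: "\<gamma> \<in> dPr D ?T" for \<gamma>
  proof
    assume "dle D ?T ?\<beta> \<gamma>"
    then have le: "dle D (cprod C ?T X) (dre D (cpr2 C ?T X) \<alpha>) (dre D (cpr1 C ?T X) \<gamma>)" using adj \<gamma> by simp
    let ?n = "cpair C (cbang C X) (cid C X)"
    have "dle D (cdom C ?n) (dre D ?n (dre D (cpr2 C ?T X) \<alpha>)) (dre D ?n (dre D (cpr1 C ?T X) \<gamma>))"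
      by (rule dre_mono) (use X \<alpha> \<gamma> le in simp_all)
    then show "dle D X \<alpha> (dre D (cbang C X) \<gamma>)" using X \<alpha> \<gamma> by simp
  next
    assume le: "dle D X \<alpha> (dre D (cbang C X) \<gamma>)"
    have "dle D (cdom C (cpr2 C ?T X)) (dre D (cpr2 C ?T X) \<alpha>) (dre D (cpr2 C ?T X) (dre D (cbang C X) \<gamma>))"
      by (rule dre_mono) (use X \<alpha> \<gamma> le in simp_all)
    then show "dle D ?T ?\<beta> \<gamma>" using X \<alpha> \<gamma> adj pr1_terminal[of X] by simp
  qed
  have "exL C D (cbang C X) \<alpha> = ?\<beta>"
    by (rule exL_eqI) (use X adj iff dle_antisym[of "cterm C"] in auto)
  then show ?thesis using adj iff by simp
qed

lemma allL_bang_adjoint: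
  assumes X: "X \<in> cObj C" and \<alpha>: "\<alpha> \<in> dPr D X"
  shows "allL C D (cbang C X) \<alpha> \<in> dPr D (cterm C) \<and> (\<forall>\<gamma>\<in>dPr D (cterm C).
    dle D (cterm C) \<gamma> (allL C D (cbang C X) \<alpha>) \<longleftrightarrow> dle D X (dre D (cbang C X) \<gamma>) \<alpha>)"
proof -
  let ?T = "cterm C"
  let ?\<beta> = "allL C D (cpr1 C ?T X) (dre D (cpr2 C ?T X) \<alpha>)"
  have adj: "?\<beta> \<in> dPr D ?T" "\<forall>\<gamma>\<in>dPr D ?T. dle D ?T \<gamma> ?\<beta> \<longleftrightarrow>
      dle D (cprod C ?T X) (dre D (cpr1 C ?T X) \<gamma>) (dre D (cpr2 C ?T X) \<alpha>)"
    using allL_pr1_adjoint[of ?T X "dre D (cpr2 C ?T X) \<alpha>"] X \<alpha> by simp_all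
  have iff: "dle D ?T \<gamma> ?\<beta> \<longleftrightarrow> dle D X (dre D (cbang C X) \<gamma>) \<alpha>" if \<gamma>: "\<gamma> \<in> dPr D ?T" for \<gamma>
  proof
    assume "dle D ?T \<gamma> ?\<beta>"
    then have le: "dle D (cprod C ?T X) (dre D (cpr1 C ?T X) \<gamma>) (dre D (cpr2 C ?T X) \<alpha>)" using adj \<gamma> by simp
    let ?n = "cpair C (cbang C X) (cid C X)"
    have "dle D (cdom C ?n) (dre D ?n (dre D (cpr1 C ?T X) \<gamma>)) (dre D ?n (dre D (cpr2 C ?T X) \<alpha>))"
      by (rule dre_mono) (use X \<alpha> \<gamma> le in simp_all)
    then show "dle D X (dre D (cbang C X) \<gamma>) \<alpha>" using X \<alpha> \<gamma> by simp
  next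
    assume le: "dle D X (dre D (cbang C X) \<gamma>) \<alpha>"
    have "dle D (cdom C (cpr2 C ?T X)) (dre D (cpr2 C ?T X) (dre D (cbang C X) \<gamma>)) (dre D (cpr2 C ?T X) \<alpha>)"
      by (rule dre_mono) (use X \<alpha> \<gamma> le in simp_all)
    then show "dle D ?T \<gamma> ?\<beta>" using X \<alpha> \<gamma> adj pr1_terminal[of X] by simp
  qed
  have "allL C D (cbang C X) \<alpha> = ?\<beta>"
    by (rule allL_eqI) (use X adj iff dle_antisym[of "cterm C"] in auto)
  then show ?thesis using adj iff by simp
qed

end

section \<open>The elementary quotient completion\<close>

context primary_doctrine
begin

lemma qobjs_iff[simp]: "(A, \<rho>) \<in> qobjs C D \<longleftrightarrow> A \<in> cObj C \<and> per_equiv C D A \<rho>"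
  unfolding qobjs_def by simp

lemma qrel_iff: "qrel C D (A,\<rho>) (B,\<sigma>) f g \<longleftrightarrow>
    dle D (cprod C A A) \<rho> (dre D (cpair C (ccomp C f (cpr1 C A A)) (ccomp C g (cpr2 C A A))) \<sigma>)"
  unfolding qrel_def ptimes_def by simp

lemma qpres_iff: "qpres C D (A,\<rho>) (B,\<sigma>) f \<longleftrightarrow> f \<in> hom C A B \<and> qrel C D (A,\<rho>) (B,\<sigma>) f f"
  unfolding qpres_def by simp

lemma qrel_at:
  assumes Pr: "\<rho> \<in> dPr D (cprod C A A)" "\<sigma> \<in> dPr D (cprod C B B)"
    and fg: "f \<in> hom C A B" "g \<in> hom C A B" "qrel C D (A,\<rho>) (B,\<sigma>) f g"
    and x: "x \<in> cArr C" "x' \<in> cArr C" "cdom C x' = cdom C x" "ccod C x = A" "ccod C x' = A"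
  shows "dle D (cdom C x) (dre D (cpair C x x') \<rho>) (dre D (cpair C (ccomp C f x) (ccomp C g x')) \<sigma>)"
proof -
  have h: "f \<in> cArr C" "cdom C f = A" "ccod C f = B" "g \<in> cArr C" "cdom C g = A" "ccod C g = B"
    using fg by (auto simp: hom_def)
  then have AB: "A \<in> cObj C" "B \<in> cObj C" by auto
  have "dle D (cdom C (cpair C x x')) (dre D (cpair C x x') \<rho>)
      (dre D (cpair C x x') (dre D (cpair C (ccomp C f (cpr1 C A A)) (ccomp C g (cpr2 C A A))) \<sigma>))"
    by (rule dre_mono) (use AB Pr h x fg(3) in \<open>simp_all add: qrel_iff\<close>)
  then show ?thesis using AB Pr h x by simp
qed

lemma qrel_sym:
  assumes \<rho>: "per_equiv C D A \<rho>" and \<sigma>: "per_equiv C D B \<sigma>"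
    and fg: "f \<in> hom C A B" "g \<in> hom C A B" "qrel C D (A,\<rho>) (B,\<sigma>) f g"
  shows "qrel C D (A,\<rho>) (B,\<sigma>) g f"
proof -
  have h: "f \<in> cArr C" "cdom C f = A" "ccod C f = B" "g \<in> cArr C" "cdom C g = A" "ccod C g = B"
    using fg by (auto simp: hom_def)
  then have AB: "A \<in> cObj C" "B \<in> cObj C" by auto
  note Pr = per_equiv_Pr[OF \<rho>] per_equiv_Pr[OF \<sigma>]
  let ?p1 = "cpr1 C A A" and ?p2 = "cpr2 C A A" and ?AA = "cprod C A A"
  have \<rho>_swap: "dle D ?AA \<rho> (dre D (cpair C ?p2 ?p1) \<rho>)"
    using per_equiv_sym[OF \<rho>, of ?p1 ?p2] AB Pr by simp
  have rel_swap: "dle D ?AA (dre D (cpair C ?p2 ?p1) \<rho>) (dre D (cpair C (ccomp C f ?p2) (ccomp C g ?p1)) \<sigma>)"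
    using qrel_at[OF Pr fg, of ?p2 ?p1] AB by simp
  have \<sigma>_swap: "dle D ?AA (dre D (cpair C (ccomp C f ?p2) (ccomp C g ?p1)) \<sigma>)
      (dre D (cpair C (ccomp C g ?p1) (ccomp C f ?p2)) \<sigma>)"
    using per_equiv_sym[OF \<sigma>, of "ccomp C f ?p2" "ccomp C g ?p1"] AB h by simp
  have "dle D ?AA \<rho> (dre D (cpair C (ccomp C g ?p1) (ccomp C f ?p2)) \<sigma>)"
    by (rule dle_trans[OF dle_trans[OF \<rho>_swap rel_swap] \<sigma>_swap]) (use AB h Pr in simp_all)
  then show ?thesis unfolding qrel_iff .
qed

lemma qrel_trans:
  assumes \<rho>: "per_equiv C D A \<rho>" and \<sigma>: "per_equiv C D B \<sigma>"
    and hom: "f \<in> hom C A B" "g \<in> hom C A B" "h \<in> hom C A B"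
    and rel: "qrel C D (A,\<rho>) (B,\<sigma>) f g" "qrel C D (A,\<rho>) (B,\<sigma>) g h"
  shows "qrel C D (A,\<rho>) (B,\<sigma>) f h"
proof -
  have arrs: "f \<in> cArr C" "cdom C f = A" "ccod C f = B" "g \<in> cArr C" "cdom C g = A" "ccod C g = B"
    "h \<in> cArr C" "cdom C h = A" "ccod C h = B"
    using hom by (auto simp: hom_def)
  then have AB: "A \<in> cObj C" "B \<in> cObj C" by auto
  note Pr = per_equiv_Pr[OF \<rho>] per_equiv_Pr[OF \<sigma>]
  let ?p1 = "cpr1 C A A" and ?p2 = "cpr2 C A A" and ?AA = "cprod C A A"
  have "dle D ?AA (ptop D ?AA) (dre D (cpair C ?p1 ?p1) \<rho>)"
    using per_equiv_refl[OF \<rho>, of ?p1] AB by simp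
  then have "dle D ?AA \<rho> (dre D (cpair C ?p1 ?p1) \<rho>)"
    by (rule dle_from_ptop) (use AB Pr in simp_all)
  moreover have "dle D ?AA (dre D (cpair C ?p1 ?p1) \<rho>) (dre D (cpair C (ccomp C f ?p1) (ccomp C g ?p1)) \<sigma>)"
    using qrel_at[OF Pr hom(1,2) rel(1), of ?p1 ?p1] AB by simp
  ultimately have fg: "dle D ?AA \<rho> (dre D (cpair C (ccomp C f ?p1) (ccomp C g ?p1)) \<sigma>)"
    by (rule dle_trans) (use AB arrs Pr in simp_all)
  have gh: "dle D ?AA \<rho> (dre D (cpair C (ccomp C g ?p1) (ccomp C h ?p2)) \<sigma>)"
    using rel(2) unfolding qrel_iff .
  have "dle D ?AA (pmeet D ?AA (dre D (cpair C (ccomp C f ?p1) (ccomp C g ?p1)) \<sigma>)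
      (dre D (cpair C (ccomp C g ?p1) (ccomp C h ?p2)) \<sigma>)) (dre D (cpair C (ccomp C f ?p1) (ccomp C h ?p2)) \<sigma>)"
    using per_equiv_trans[OF \<sigma>, of "ccomp C f ?p1" "ccomp C g ?p1" "ccomp C h ?p2"] AB arrs by simp
  then have "dle D ?AA \<rho> (dre D (cpair C (ccomp C f ?p1) (ccomp C h ?p2)) \<sigma>)"
    by (rule le_pmeet_trans[OF fg gh]) (use AB arrs Pr in simp_all)
  then show ?thesis unfolding qrel_iff .
qed

lemma qrel_comp:
  assumes Pr: "\<rho> \<in> dPr D (cprod C A A)" "\<sigma> \<in> dPr D (cprod C B B)" "\<tau> \<in> dPr D (cprod C E E)"
    and hom: "f \<in> hom C A B" "f' \<in> hom C A B" "g \<in> hom C B E" "g' \<in> hom C B E"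
    and rel: "qrel C D (A,\<rho>) (B,\<sigma>) f f'" "qrel C D (B,\<sigma>) (E,\<tau>) g g'"
  shows "qrel C D (A,\<rho>) (E,\<tau>) (ccomp C g f) (ccomp C g' f')"
proof -
  have arrs: "f \<in> cArr C" "cdom C f = A" "ccod C f = B" "f' \<in> cArr C" "cdom C f' = A" "ccod C f' = B"
    "g \<in> cArr C" "cdom C g = B" "ccod C g = E" "g' \<in> cArr C" "cdom C g' = B" "ccod C g' = E"
    using hom by (auto simp: hom_def)
  then have objs: "A \<in> cObj C" "B \<in> cObj C" "E \<in> cObj C" by auto
  let ?p1 = "cpr1 C A A" and ?p2 = "cpr2 C A A" and ?AA = "cprod C A A"
  have "dle D ?AA \<rho> (dre D (cpair C (ccomp C f ?p1) (ccomp C f' ?p2)) \<sigma>)"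
    using rel(1) unfolding qrel_iff .
  moreover have "dle D ?AA (dre D (cpair C (ccomp C f ?p1) (ccomp C f' ?p2)) \<sigma>)
      (dre D (cpair C (ccomp C g (ccomp C f ?p1)) (ccomp C g' (ccomp C f' ?p2))) \<tau>)"
    using qrel_at[OF Pr(2,3) hom(3,4) rel(2), of "ccomp C f ?p1" "ccomp C f' ?p2"] objs arrs by simp
  ultimately have "dle D ?AA \<rho> (dre D (cpair C (ccomp C g (ccomp C f ?p1)) (ccomp C g' (ccomp C f' ?p2))) \<tau>)"
    by (rule dle_trans) (use objs arrs Pr in simp_all)
  then show ?thesis unfolding qrel_iff using objs arrs by simp
qed

lemma qrel_pair:
  assumes Pr: "\<rho> \<in> dPr D (cprod C A A)" "\<sigma> \<in> dPr D (cprod C B B)" "\<tau> \<in> dPr D (cprod C E E)"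
    and hom: "f \<in> hom C A B" "f' \<in> hom C A B" "g \<in> hom C A E" "g' \<in> hom C A E"
    and rel: "qrel C D (A,\<rho>) (B,\<sigma>) f f'" "qrel C D (A,\<rho>) (E,\<tau>) g g'"
  shows "qrel C D (A,\<rho>) (qprod C D (B,\<sigma>) (E,\<tau>)) (cpair C f g) (cpair C f' g')"
proof -
  have arrs: "f \<in> cArr C" "cdom C f = A" "ccod C f = B" "f' \<in> cArr C" "cdom C f' = A" "ccod C f' = B"
    "g \<in> cArr C" "cdom C g = A" "ccod C g = E" "g' \<in> cArr C" "cdom C g' = A" "ccod C g' = E"
    using hom by (auto simp: hom_def)
  then have "qrel C D (A, \<rho>) (cprod C B E, qprodrel C D B E \<sigma> \<tau>) (cpair C f g) (cpair C f' g')"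
    using rel Pr unfolding qrel_iff by (auto simp: dre_qprodrel le_pmeetI)
  then show ?thesis by (simp add: qprod_def)
qed

lemma qcat_sel[simp]: "cObj (qcat C D) = qobjs C D" "cArr (qcat C D) = qarrs C D" "cdom (qcat C D) = fst"
  "ccod (qcat C D) = (\<lambda>F. fst (snd F))" "ccomp (qcat C D) = qcomp C D" "cid (qcat C D) = qid C D"
  "cprod (qcat C D) = qprod C D" "cpr1 (qcat C D) = qpr1 C D" "cpr2 (qcat C D) = qpr2 C D"
  "cpair (qcat C D) = qpair C D" "cterm (qcat C D) = qterm C D" "cbang (qcat C D) = qbang C D"
  by (simp_all add: qcat_def)

lemma qdoc_sel[simp]: "dle (qdoc C D) X = dle D (fst X)" "dre (qdoc C D) F = dre D (qrep F)"
    "deq (qdoc C D) = snd"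
  by (simp_all add: qdoc_def)

lemma qdoc_Pr: "dPr (qdoc C D) X = {\<alpha>. descent (fst X) (snd X) \<alpha>}"
  by (auto simp: qdoc_def descent_def)

lemma qclass_iff: "g \<in> qclass C D X Y f \<longleftrightarrow> qpres C D X Y g \<and> qrel C D X Y g f"
  unfolding qclass_def by simp

lemma qclass_self: "qpres C D X Y f \<Longrightarrow> f \<in> qclass C D X Y f"
  unfolding qclass_def qpres_def by simp

lemma qrep_in: "qpres C D X Y f \<Longrightarrow> qrep (X', Y', qclass C D X Y f) \<in> qclass C D X Y f"
  unfolding qrep_def snd_conv by (rule someI[of _ f]) (rule qclass_self)

lemma qclass_eq:
  assumes \<rho>: "per_equiv C D A \<rho>" and \<sigma>: "per_equiv C D B \<sigma>"
    and f: "qpres C D (A,\<rho>) (B,\<sigma>) f" "qpres C D (A,\<rho>) (B,\<sigma>) f'" "qrel C D (A,\<rho>) (B,\<sigma>) f f'"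
  shows "qclass C D (A,\<rho>) (B,\<sigma>) f = qclass C D (A,\<rho>) (B,\<sigma>) f'"
proof -
  have h: "f \<in> hom C A B" "f' \<in> hom C A B" using f qpres_iff by auto
  have "qrel C D (A,\<rho>) (B,\<sigma>) f' f" using qrel_sym[OF \<rho> \<sigma> h f(3)] .
  then show ?thesis
    unfolding qclass_iff set_eq_iff using qrel_trans[OF \<rho> \<sigma>] h f(3) qpres_iff by blast
qed

lemma qcat_hom_iff: "F \<in> hom (qcat C D) X Y \<longleftrightarrow>
    X \<in> qobjs C D \<and> Y \<in> qobjs C D \<and> (\<exists>f. qpres C D X Y f \<and> F = (X, Y, qclass C D X Y f))"
  unfolding hom_def by (cases F rule: prod_cases3) (auto simp: qarrs_def)

lemma qcat_hom_triple: "F \<in> hom (qcat C D) X Y \<Longrightarrow> \<exists>S. F = (X, Y, S)"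
  by (cases F) (auto simp: hom_def)

lemma qrep_qpres: "F \<in> hom (qcat C D) X Y \<Longrightarrow> qpres C D X Y (qrep F) \<and> F = (X, Y, qclass C D X Y (qrep F))"
proof -
  assume "F \<in> hom (qcat C D) X Y"
  then obtain f where f: "X \<in> qobjs C D" "Y \<in> qobjs C D" "qpres C D X Y f" "F = (X, Y, qclass C D X Y f)"
    unfolding qcat_hom_iff by blast
  then have r: "qrep F \<in> qclass C D X Y f" using qrep_in by simp
  obtain A \<rho> B \<sigma> where XY: "X = (A,\<rho>)" "Y = (B,\<sigma>)" by fastforce
  have "qclass C D X Y f = qclass C D X Y (qrep F)"
    using f r XY qclass_eq[of A \<rho> B \<sigma> "qrep F" f] qrel_sym by (simp add: qclass_iff qpres_iff)
  then show ?thesis using f r by (simp add: qclass_iff)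
qed

lemma qprod_obj[simp]: "(A,\<rho>) \<in> qobjs C D \<Longrightarrow> (B,\<sigma>) \<in> qobjs C D \<Longrightarrow> qprod C D (A,\<rho>) (B,\<sigma>) \<in> qobjs C D"
  unfolding qprod_def using per_equiv_qprodrel by simp

lemma qprodrel_unfold: "qprodrel C D A B \<rho> \<sigma> = pmeet D (cprod C (cprod C A B) (cprod C A B))
  (dre D (cpair C (ccomp C (cpr1 C A B) (cpr1 C (cprod C A B) (cprod C A B)))
    (ccomp C (cpr1 C A B) (cpr2 C (cprod C A B) (cprod C A B)))) \<rho>)
  (dre D (cpair C (ccomp C (cpr2 C A B) (cpr1 C (cprod C A B) (cprod C A B)))
    (ccomp C (cpr2 C A B) (cpr2 C (cprod C A B) (cprod C A B)))) \<sigma>)"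
  unfolding qprodrel_def Let_def ptimes_def by simp

lemma qpres_id: "(A,\<rho>) \<in> qobjs C D \<Longrightarrow> qpres C D (A,\<rho>) (A,\<rho>) (cid C A)"
  unfolding qpres_iff qrel_iff using per_equiv_Pr[of A \<rho>] by (simp add: hom_def)

lemma qpres_pr1: "(A,\<rho>) \<in> qobjs C D \<Longrightarrow> (B,\<sigma>) \<in> qobjs C D \<Longrightarrow>
    qpres C D (qprod C D (A,\<rho>) (B,\<sigma>)) (A,\<rho>) (cpr1 C A B)"
  and qpres_pr2: "(A,\<rho>) \<in> qobjs C D \<Longrightarrow> (B,\<sigma>) \<in> qobjs C D \<Longrightarrow>
    qpres C D (qprod C D (A,\<rho>) (B,\<sigma>)) (B,\<sigma>) (cpr2 C A B)"
  unfolding qprod_def using per_equiv_Pr[of A \<rho>] per_equiv_Pr[of B \<sigma>]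
  by (simp_all add: qpres_iff qrel_iff hom_def qprodrel_unfold pmeet_le1 pmeet_le2)

lemma qpres_comp: "(A,\<rho>) \<in> qobjs C D \<Longrightarrow> (B,\<sigma>) \<in> qobjs C D \<Longrightarrow> (E,\<tau>) \<in> qobjs C D \<Longrightarrow>
    qpres C D (A,\<rho>) (B,\<sigma>) f \<Longrightarrow> qpres C D (B,\<sigma>) (E,\<tau>) g \<Longrightarrow> qpres C D (A,\<rho>) (E,\<tau>) (ccomp C g f)"
  unfolding qpres_iff using qrel_comp[of \<rho> A \<sigma> B \<tau> E f f g g] per_equiv_Pr[of A \<rho>] per_equiv_Pr[of B \<sigma>]
    per_equiv_Pr[of E \<tau>]
  by (auto simp: hom_def)

lemma qpres_pair: "(A,\<rho>) \<in> qobjs C D \<Longrightarrow> (B,\<sigma>) \<in> qobjs C D \<Longrightarrow> (E,\<tau>) \<in> qobjs C D \<Longrightarrow>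
    qpres C D (A,\<rho>) (B,\<sigma>) f \<Longrightarrow> qpres C D (A,\<rho>) (E,\<tau>) g \<Longrightarrow>
    qpres C D (A,\<rho>) (qprod C D (B,\<sigma>) (E,\<tau>)) (cpair C f g)"
  using qrel_pair[of \<rho> A \<sigma> B \<tau> E f f g g] per_equiv_Pr[of A \<rho>] per_equiv_Pr[of B \<sigma>] per_equiv_Pr[of E \<tau>]
  by (auto simp: qpres_iff qprod_def hom_def)

lemma dre_qrel_eq:
  assumes \<rho>: "per_equiv C D A \<rho>" and \<sigma>: "per_equiv C D B \<sigma>"
    and fg: "f \<in> hom C A B" "g \<in> hom C A B" "qrel C D (A,\<rho>) (B,\<sigma>) f g" and \<alpha>: "descent B \<sigma> \<alpha>"
  shows "dre D f \<alpha> = dre D g \<alpha>"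
proof -
  note Pr = per_equiv_Pr[OF \<rho>] per_equiv_Pr[OF \<sigma>]
  have \<alpha>Pr: "\<alpha> \<in> dPr D B" using descent_Pr[OF \<alpha>] .
  have le: "dle D A (dre D u \<alpha>) (dre D v \<alpha>)"
    if uv: "u \<in> hom C A B" "v \<in> hom C A B" "qrel C D (A,\<rho>) (B,\<sigma>) u v" for u v
  proof -
    have arrs: "u \<in> cArr C" "cdom C u = A" "ccod C u = B" "v \<in> cArr C" "cdom C v = A" "ccod C v = B"
      using uv by (auto simp: hom_def)
    then have AB: "A \<in> cObj C" "B \<in> cObj C" by auto
    have "dle D A (ptop D A) (dre D (cpair C (cid C A) (cid C A)) \<rho>)"
      using per_equiv_refl[OF \<rho>, of "cid C A"] AB by simp
    moreover have "dle D A (dre D (cpair C (cid C A) (cid C A)) \<rho>) (dre D (cpair C u v) \<sigma>)"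
      using qrel_at[OF Pr uv, of "cid C A" "cid C A"] AB arrs by simp
    ultimately have "dle D A (ptop D A) (dre D (cpair C u v) \<sigma>)"
      by (rule dle_trans) (use AB arrs Pr in simp_all)
    then have le: "dle D A (dre D u \<alpha>) (dre D (cpair C u v) \<sigma>)"
      by (rule dle_from_ptop) (use AB arrs Pr \<alpha>Pr in simp_all)
    show ?thesis
      by (rule le_pmeet_trans[OF dle_refl le descent_at[OF \<alpha> Pr(2) arrs(1,4), unfolded arrs(2)]])
        (use AB arrs Pr \<alpha>Pr in simp_all)
  qed
  have A: "A \<in> cObj C" using fg by (auto simp: hom_def)
  show ?thesis
    by (rule dle_antisym[OF A _ _ le[OF fg] le[OF fg(2,1) qrel_sym[OF \<rho> \<sigma> fg]]]) (use fg \<alpha>Pr in \<open>auto simp: hom_def\<close>)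
qed

lemma descent_dre:
  assumes \<rho>: "per_equiv C D A \<rho>" and \<sigma>: "per_equiv C D B \<sigma>" and f: "qpres C D (A,\<rho>) (B,\<sigma>) f"
    and \<alpha>: "descent B \<sigma> \<alpha>"
  shows "descent A \<rho> (dre D f \<alpha>)"
proof -
  note Pr = per_equiv_Pr[OF \<rho>] per_equiv_Pr[OF \<sigma>]
  have rel: "qrel C D (A,\<rho>) (B,\<sigma>) f f" and arrs: "f \<in> cArr C" "cdom C f = A" "ccod C f = B"
    using f by (auto simp: qpres_iff hom_def)
  then have AB: "A \<in> cObj C" "B \<in> cObj C" by auto
  have \<alpha>Pr: "\<alpha> \<in> dPr D B" using descent_Pr[OF \<alpha>] .
  let ?p1 = "cpr1 C A A" and ?p2 = "cpr2 C A A" and ?AA = "cprod C A A"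
  have \<rho>_le: "dle D ?AA \<rho> (dre D (cpair C (ccomp C f ?p1) (ccomp C f ?p2)) \<sigma>)"
    using rel qrel_iff by simp
  have "dle D ?AA (pmeet D ?AA (dre D (ccomp C f ?p1) \<alpha>) \<rho>)
      (pmeet D ?AA (dre D (ccomp C f ?p1) \<alpha>) (dre D (cpair C (ccomp C f ?p1) (ccomp C f ?p2)) \<sigma>))"
    by (rule pmeet_mono[OF dle_refl \<rho>_le]) (use AB arrs \<alpha>Pr Pr in simp_all)
  moreover have "dle D ?AA (pmeet D ?AA (dre D (ccomp C f ?p1) \<alpha>)
      (dre D (cpair C (ccomp C f ?p1) (ccomp C f ?p2)) \<sigma>)) (dre D (ccomp C f ?p2) \<alpha>)"
    using descent_at[OF \<alpha> Pr(2), of "ccomp C f ?p1" "ccomp C f ?p2"] AB arrs by simp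
  ultimately have "dle D ?AA (pmeet D ?AA (dre D (ccomp C f ?p1) \<alpha>) \<rho>) (dre D (ccomp C f ?p2) \<alpha>)"
    by (rule dle_trans) (use AB arrs \<alpha>Pr Pr in simp_all)
  then show ?thesis unfolding descent_def using AB arrs \<alpha>Pr by simp
qed

end

context elementary_doctrine
begin

text \<open>Substitute \<open>x'\<close> for \<open>x\<close> in \<open>f x \<sigma> f x\<close>.\<close>
lemma qpres_from_deq:
  assumes X: "X \<in> cObj C" and \<sigma>: "per_equiv C D B \<sigma>" and f: "f \<in> hom C X B"
  shows "qpres C D (X, deq D X) (B, \<sigma>) f"
proof -
  have arrs: "f \<in> cArr C" "cdom C f = X" "ccod C f = B" using f by (auto simp: hom_def)
  then have B: "B \<in> cObj C" by auto
  have \<sigma>Pr: "\<sigma> \<in> dPr D (cprod C B B)" using per_equiv_Pr[OF \<sigma>] .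
  let ?XX = "cprod C X X" and ?p1 = "cpr1 C X X" and ?p2 = "cpr2 C X X"
  let ?\<phi> = "dre D (cpair C (ccomp C f (ccomp C ?p1 (cpr1 C ?XX X))) (ccomp C f (cpr2 C ?XX X))) \<sigma>"
  have "dle D ?XX (pmeet D ?XX (dre D (cpair C (cid C ?XX) ?p1) ?\<phi>) (dre D (cpair C ?p1 ?p2) (deq D X)))
      (dre D (cpair C (cid C ?XX) ?p2) ?\<phi>)"
    using deq_subst[of ?XX X ?\<phi> "cid C ?XX" ?p1 ?p2] X B arrs \<sigma>Pr by simp
  then have subst: "dle D ?XX (pmeet D ?XX (dre D (cpair C (ccomp C f ?p1) (ccomp C f ?p1)) \<sigma>) (deq D X))
      (dre D (cpair C (ccomp C f ?p1) (ccomp C f ?p2)) \<sigma>)"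
    using X B arrs \<sigma>Pr by simp
  have "dle D ?XX (ptop D ?XX) (dre D (cpair C (ccomp C f ?p1) (ccomp C f ?p1)) \<sigma>)"
    using per_equiv_refl[OF \<sigma>, of "ccomp C f ?p1"] X arrs by simp
  then have "dle D ?XX (deq D X) (dre D (cpair C (ccomp C f ?p1) (ccomp C f ?p1)) \<sigma>)"
    by (rule dle_from_ptop) (use X B arrs \<sigma>Pr in simp_all)
  then have "dle D ?XX (deq D X) (dre D (cpair C (ccomp C f ?p1) (ccomp C f ?p2)) \<sigma>)"
    by (rule le_pmeet_trans[OF _ dle_refl subst]) (use X B arrs \<sigma>Pr in simp_all)
  then show ?thesis unfolding qpres_iff qrel_iff using f by simp
qed

text \<open>Substitute first \<open>a'\<close>, then \<open>b'\<close>, into \<open>(a, b) = (a, b)\<close>.\<close>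
lemma qprodrel_deq_le:
  assumes A: "A \<in> cObj C" and B: "B \<in> cObj C"
  shows "dle D (cprod C (cprod C A B) (cprod C A B)) (qprodrel C D A B (deq D A) (deq D B)) (deq D (cprod C A B))"
proof -
  let ?P = "cprod C A B"
  let ?Q = "cprod C ?P ?P"
  let ?x = "cpr1 C ?P ?P" and ?x' = "cpr2 C ?P ?P"
  let ?a = "ccomp C (cpr1 C A B) ?x" and ?b = "ccomp C (cpr2 C A B) ?x"
  let ?a' = "ccomp C (cpr1 C A B) ?x'" and ?b' = "ccomp C (cpr2 C A B) ?x'"
  let ?dA = "dre D (cpair C ?a ?a') (deq D A)" and ?dB = "dre D (cpair C ?b ?b') (deq D B)"
  let ?m = "dre D (cpair C ?x (cpair C ?a' ?b)) (deq D ?P)"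
  have Pr: "?dA \<in> dPr D ?Q" "?dB \<in> dPr D ?Q" "?m \<in> dPr D ?Q" using A B by simp_all
  let ?\<phi>1 = "dre D (cpair C (ccomp C ?x (cpr1 C ?Q A)) (cpair C (cpr2 C ?Q A) (ccomp C ?b (cpr1 C ?Q A)))) (deq D ?P)"
  have "dle D ?Q (pmeet D ?Q (dre D (cpair C (cid C ?Q) ?a) ?\<phi>1) ?dA) (dre D (cpair C (cid C ?Q) ?a') ?\<phi>1)"
    using deq_subst[of ?Q A ?\<phi>1 "cid C ?Q" ?a ?a'] A B by simp
  then have subst1: "dle D ?Q (pmeet D ?Q (dre D (cpair C ?x ?x) (deq D ?P)) ?dA) ?m"
    using A B by simp
  have "dle D ?Q (ptop D ?Q) (dre D (cpair C ?x ?x) (deq D ?P))"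
    using deq_refl[of ?x ?P] A B by simp
  then have "dle D ?Q (pmeet D ?Q ?dA ?dB) (dre D (cpair C ?x ?x) (deq D ?P))"
    by (rule dle_from_ptop) (use A B Pr in simp_all)
  then have "dle D ?Q (pmeet D ?Q ?dA ?dB) ?m"
    by (rule le_pmeet_trans[OF _ pmeet_le1 subst1]) (use A B Pr in simp_all)
  then have "dle D ?Q (pmeet D ?Q ?dA ?dB) (pmeet D ?Q ?m ?dB)"
    by (rule le_pmeetI[OF _ pmeet_le2]) (use A B Pr in simp_all)
  moreover
  let ?\<phi>2 = "dre D (cpair C (ccomp C ?x (cpr1 C ?Q B)) (cpair C (ccomp C ?a' (cpr1 C ?Q B)) (cpr2 C ?Q B))) (deq D ?P)"
  have "dle D ?Q (pmeet D ?Q (dre D (cpair C (cid C ?Q) ?b) ?\<phi>2) ?dB) (dre D (cpair C (cid C ?Q) ?b') ?\<phi>2)"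
    using deq_subst[of ?Q B ?\<phi>2 "cid C ?Q" ?b ?b'] A B by simp
  then have "dle D ?Q (pmeet D ?Q ?m ?dB) (deq D ?P)"
    using A B by simp
  ultimately show ?thesis
    unfolding qprodrel_unfold by (rule dle_trans) (use A B Pr in simp_all)
qed

lemma qpres_from_deq_prod:
  assumes W: "W \<in> cObj C" and A: "A \<in> cObj C" and \<sigma>: "per_equiv C D B \<sigma>" and f: "f \<in> hom C (cprod C W A) B"
  shows "qpres C D (qprod C D (W, deq D W) (A, deq D A)) (B, \<sigma>) f"
proof -
  let ?P = "cprod C W A"
  have f_arrs: "f \<in> cArr C" "cdom C f = ?P" "ccod C f = B" using f by (auto simp: hom_def)
  have "dle D (cprod C ?P ?P) (deq D ?P)
      (dre D (cpair C (ccomp C f (cpr1 C ?P ?P)) (ccomp C f (cpr2 C ?P ?P))) \<sigma>)"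
    using qpres_from_deq[OF _ \<sigma> f] W A by (simp add: qpres_iff qrel_iff)
  then have "dle D (cprod C ?P ?P) (qprodrel C D W A (deq D W) (deq D A))
      (dre D (cpair C (ccomp C f (cpr1 C ?P ?P)) (ccomp C f (cpr2 C ?P ?P))) \<sigma>)"
    by (rule dle_trans[OF qprodrel_deq_le[OF W A]]) (use W A f_arrs per_equiv_Pr[OF \<sigma>] in simp_all)
  then show ?thesis
    using f by (simp add: qpres_iff qrel_iff qprod_def)
qed

lemma descent_qprodrel_deq:
  assumes A: "A \<in> cObj C" and B: "B \<in> cObj C" and R: "R \<in> dPr D (cprod C A B)"
  shows "descent (cprod C A B) (qprodrel C D A B (deq D A) (deq D B)) R"
  by (rule descent_antimono[OF _ _ _ qprodrel_deq_le[OF A B] descent_deq]) (use A B R in simp_all)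

lemma qpres_bang: "(A,\<rho>) \<in> qobjs C D \<Longrightarrow> qpres C D (A,\<rho>) (qterm C D) (cbang C A)"
proof -
  assume "(A,\<rho>) \<in> qobjs C D"
  then have A: "A \<in> cObj C" and \<rho>: "\<rho> \<in> dPr D (cprod C A A)" using per_equiv_Pr by auto
  let ?b = "cbang C (cprod C A A)"
  have "dle D (cprod C A A) (ptop D (cprod C A A)) (dre D (cpair C ?b ?b) (deq D (cterm C)))"
    using deq_refl[of ?b "cterm C"] A by simp
  then have "dle D (cprod C A A) \<rho> (dre D (cpair C ?b ?b) (deq D (cterm C)))"
    by (rule dle_from_ptop) (use A \<rho> in simp_all)
  then show ?thesis unfolding qterm_def qpres_iff qrel_iff using A by (simp add: hom_def)
qed

end

context primary_doctrine
begin

text \<open>An arrow of \<open>\<Q>\<^sub>P\<close> is a triple (domain, codomain, class); \<open>f\<close> represents it if it lies in the class.\<close>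
definition represents :: "'a \<Rightarrow> ('o \<times> 'p) \<times> ('o \<times> 'p) \<times> 'a set \<Rightarrow> bool" where
  "represents f F \<longleftrightarrow> qpres C D (fst F) (fst (snd F)) f \<and> snd (snd F) = qclass C D (fst F) (fst (snd F)) f"

lemma represents_class: "qpres C D X Y f \<Longrightarrow> represents f (X, Y, qclass C D X Y f)"
  unfolding represents_def by simp

lemma qcat_homI: "X \<in> qobjs C D \<Longrightarrow> Y \<in> qobjs C D \<Longrightarrow> represents f (X, Y, S) \<Longrightarrow> (X, Y, S) \<in> hom (qcat C D) X Y"
  unfolding represents_def qcat_hom_iff by auto

lemma represents_qrep_hom: "F \<in> hom (qcat C D) X Y \<Longrightarrow> represents (qrep F) F"
proof -
  assume "F \<in> hom (qcat C D) X Y"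
  then have "qpres C D X Y (qrep F)" "F = (X, Y, qclass C D X Y (qrep F))"
    using qrep_qpres by blast+
  then show ?thesis unfolding represents_def by (metis fst_conv snd_conv)
qed

lemma represents_eq: "represents f F \<Longrightarrow> represents f F' \<Longrightarrow> fst F = fst F' \<Longrightarrow> fst (snd F) = fst (snd F') \<Longrightarrow> F = F'"
  unfolding represents_def by (cases F, cases F') simp

lemma represents_qrel:
  assumes \<rho>: "per_equiv C D A \<rho>" and \<sigma>: "per_equiv C D B \<sigma>"
    and f: "represents f ((A,\<rho>), (B,\<sigma>), S)" and g: "represents g ((A,\<rho>), (B,\<sigma>), S)"
  shows "qrel C D (A,\<rho>) (B,\<sigma>) f g"
proof -
  have "g \<in> qclass C D (A,\<rho>) (B,\<sigma>) f" using f g qclass_self unfolding represents_def by auto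
  then show ?thesis using qrel_sym[OF \<rho> \<sigma>] f by (auto simp: qclass_iff qpres_iff represents_def)
qed

lemma represents_qrelI:
  assumes \<rho>: "per_equiv C D A \<rho>" and \<sigma>: "per_equiv C D B \<sigma>"
    and f: "represents f ((A,\<rho>), (B,\<sigma>), S)" and g: "qpres C D (A,\<rho>) (B,\<sigma>) g" "qrel C D (A,\<rho>) (B,\<sigma>) g f"
  shows "represents g ((A,\<rho>), (B,\<sigma>), S)"
  using qclass_eq[OF \<rho> \<sigma> g(1) _ g(2)] f g(1) unfolding represents_def by simp

lemma represents_qrep:
  assumes \<rho>: "per_equiv C D A \<rho>" and \<sigma>: "per_equiv C D B \<sigma>" and f: "represents f ((A,\<rho>), (B,\<sigma>), S)"
  shows "represents (qrep ((A,\<rho>), (B,\<sigma>), S)) ((A,\<rho>), (B,\<sigma>), S)"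
proof -
  have S: "S = qclass C D (A,\<rho>) (B,\<sigma>) f" and pres: "qpres C D (A,\<rho>) (B,\<sigma>) f"
    using f unfolding represents_def by simp_all
  have "qrep ((A,\<rho>), (B,\<sigma>), S) \<in> qclass C D (A,\<rho>) (B,\<sigma>) f"
    using qrep_in[OF pres] S by simp
  then show ?thesis
    using represents_qrelI[OF \<rho> \<sigma> f] by (simp add: qclass_iff)
qed

lemma represents_qcomp:
  assumes objs: "(A,\<rho>) \<in> qobjs C D" "(B,\<sigma>) \<in> qobjs C D" "(E,\<tau>) \<in> qobjs C D"
    and f: "represents f ((A,\<rho>), (B,\<sigma>), S)" and g: "represents g ((B,\<sigma>), (E,\<tau>), T)"
  shows "represents (ccomp C g f) (qcomp C D ((B,\<sigma>), (E,\<tau>), T) ((A,\<rho>), (B,\<sigma>), S))"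
proof -
  have per: "per_equiv C D A \<rho>" "per_equiv C D B \<sigma>" "per_equiv C D E \<tau>" using objs by auto
  note Pr = per_equiv_Pr[OF per(1)] per_equiv_Pr[OF per(2)] per_equiv_Pr[OF per(3)]
  let ?f' = "qrep ((A,\<rho>), (B,\<sigma>), S)" and ?g' = "qrep ((B,\<sigma>), (E,\<tau>), T)"
  have f': "represents ?f' ((A,\<rho>), (B,\<sigma>), S)" and g': "represents ?g' ((B,\<sigma>), (E,\<tau>), T)"
    using represents_qrep per f g by blast+
  have pres: "qpres C D (A,\<rho>) (E,\<tau>) (ccomp C ?g' ?f')" "qpres C D (A,\<rho>) (E,\<tau>) (ccomp C g f)"
    using qpres_comp[OF objs] f g f' g' unfolding represents_def by simp_all
  have "qrel C D (A,\<rho>) (E,\<tau>) (ccomp C ?g' ?f') (ccomp C g f)"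
    using qrel_comp[OF Pr] represents_qrel[OF per(1,2) f' f] represents_qrel[OF per(2,3) g' g] f g f' g'
    by (simp add: represents_def qpres_iff)
  then show ?thesis
    using qclass_eq[OF per(1,3) pres] pres(2) unfolding qcomp_def represents_def by simp
qed

lemma represents_qid: "(A,\<rho>) \<in> qobjs C D \<Longrightarrow> represents (cid C A) (qid C D (A,\<rho>))"
  unfolding qid_def using represents_class[OF qpres_id] by simp

lemma represents_qpr1: "(A,\<rho>) \<in> qobjs C D \<Longrightarrow> (B,\<sigma>) \<in> qobjs C D \<Longrightarrow>
    represents (cpr1 C A B) (qpr1 C D (A,\<rho>) (B,\<sigma>))"
  and represents_qpr2: "(A,\<rho>) \<in> qobjs C D \<Longrightarrow> (B,\<sigma>) \<in> qobjs C D \<Longrightarrow>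
    represents (cpr2 C A B) (qpr2 C D (A,\<rho>) (B,\<sigma>))"
  unfolding qpr1_def qpr2_def using represents_class[OF qpres_pr1] represents_class[OF qpres_pr2] by simp_all

lemma represents_qpair:
  assumes objs: "(A,\<rho>) \<in> qobjs C D" "(B,\<sigma>) \<in> qobjs C D" "(E,\<tau>) \<in> qobjs C D"
    and f: "represents f ((A,\<rho>), (B,\<sigma>), S)" and g: "represents g ((A,\<rho>), (E,\<tau>), T)"
  shows "represents (cpair C f g) (qpair C D ((A,\<rho>), (B,\<sigma>), S) ((A,\<rho>), (E,\<tau>), T))"
proof -
  have per: "per_equiv C D A \<rho>" "per_equiv C D B \<sigma>" "per_equiv C D E \<tau>" using objs by auto
  note Pr = per_equiv_Pr[OF per(1)] per_equiv_Pr[OF per(2)] per_equiv_Pr[OF per(3)]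
  let ?f' = "qrep ((A,\<rho>), (B,\<sigma>), S)" and ?g' = "qrep ((A,\<rho>), (E,\<tau>), T)"
  let ?P = "qprod C D (B,\<sigma>) (E,\<tau>)"
  have f': "represents ?f' ((A,\<rho>), (B,\<sigma>), S)" and g': "represents ?g' ((A,\<rho>), (E,\<tau>), T)"
    using represents_qrep per f g by blast+
  have pres: "qpres C D (A,\<rho>) ?P (cpair C ?f' ?g')" "qpres C D (A,\<rho>) ?P (cpair C f g)"
    using qpres_pair[OF objs] f g f' g' unfolding represents_def by simp_all
  have "qrel C D (A,\<rho>) ?P (cpair C ?f' ?g') (cpair C f g)"
    using qrel_pair[OF Pr] represents_qrel[OF per(1,2) f' f] represents_qrel[OF per(1,3) g' g] f g f' g'
    by (simp add: represents_def qpres_iff)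
  moreover have "per_equiv C D (cprod C B E) (qprodrel C D B E \<sigma> \<tau>)"
    using per_equiv_qprodrel per objs by simp
  ultimately show ?thesis
    using qclass_eq[OF per(1), of "cprod C B E" "qprodrel C D B E \<sigma> \<tau>"] pres
    unfolding qpair_def represents_def Let_def by (simp add: qprod_def)
qed

lemma represents_ptimes:
  assumes objs: "(Z,\<zeta>) \<in> qobjs C D" "(W,\<omega>) \<in> qobjs C D" "(A,\<alpha>) \<in> qobjs C D" "(B,\<beta>) \<in> qobjs C D"
    and g: "represents g ((Z,\<zeta>), (W,\<omega>), S)" and h: "represents h ((A,\<alpha>), (B,\<beta>), T)"
  shows "represents (ptimes C Z A g h) (ptimes (qcat C D) (Z,\<zeta>) (A,\<alpha>) ((Z,\<zeta>), (W,\<omega>), S) ((A,\<alpha>), (B,\<beta>), T))"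
proof -
  let ?X = "qprod C D (Z,\<zeta>) (A,\<alpha>)"
  have X: "?X = (cprod C Z A, qprodrel C D Z A \<zeta> \<alpha>)" "?X \<in> qobjs C D"
    using objs by (simp_all add: qprod_def per_equiv_qprodrel)
  have "represents (ccomp C g (cpr1 C Z A)) (qcomp C D ((Z,\<zeta>), (W,\<omega>), S) (qpr1 C D (Z,\<zeta>) (A,\<alpha>)))"
    using represents_qcomp[OF X(2)[unfolded X(1)] objs(1,2) _ g] represents_qpr1[OF objs(1,3)] X(1)
    by (simp add: qpr1_def)
  moreover have "represents (ccomp C h (cpr2 C Z A)) (qcomp C D ((A,\<alpha>), (B,\<beta>), T) (qpr2 C D (Z,\<zeta>) (A,\<alpha>)))"
    using represents_qcomp[OF X(2)[unfolded X(1)] objs(3,4) _ h] represents_qpr2[OF objs(1,3)] X(1)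
    by (simp add: qpr2_def)
  ultimately show ?thesis
    using represents_qpair[OF X(2)[unfolded X(1)] objs(2,4)] X(1)
    by (simp add: ptimes_def qcomp_def qpr1_def qpr2_def)
qed

lemma dre_represents:
  assumes \<rho>: "per_equiv C D A \<rho>" and \<sigma>: "per_equiv C D B \<sigma>"
    and f: "represents f ((A,\<rho>), (B,\<sigma>), S)" and \<gamma>: "descent B \<sigma> \<gamma>"
  shows "dre (qdoc C D) ((A,\<rho>), (B,\<sigma>), S) \<gamma> = dre D f \<gamma>"
proof -
  have f': "represents (qrep ((A,\<rho>), (B,\<sigma>), S)) ((A,\<rho>), (B,\<sigma>), S)"
    using represents_qrep[OF \<rho> \<sigma> f] .
  show ?thesis
    using dre_qrel_eq[OF \<rho> \<sigma> _ _ represents_qrel[OF \<rho> \<sigma> f' f] \<gamma>] f f'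
    by (simp add: represents_def qpres_iff)
qed

lemma qdoc_exL_eqI:
  assumes objs: "(A,\<rho>) \<in> qobjs C D" "(B,\<sigma>) \<in> qobjs C D" and f: "represents f ((A,\<rho>), (B,\<sigma>), S)"
    and \<beta>: "descent B \<sigma> \<beta>" and adj: "\<And>\<gamma>. descent B \<sigma> \<gamma> \<Longrightarrow> dle D B \<beta> \<gamma> \<longleftrightarrow> dle D A \<alpha> (dre D f \<gamma>)"
  shows "exL (qcat C D) (qdoc C D) ((A,\<rho>), (B,\<sigma>), S) \<alpha> = \<beta>"
proof (rule exL_eqI)
  have B: "B \<in> cObj C" using objs by simp
  show "\<And>x y. x \<in> dPr (qdoc C D) (ccod (qcat C D) ((A,\<rho>), (B,\<sigma>), S)) \<Longrightarrow>
      y \<in> dPr (qdoc C D) (ccod (qcat C D) ((A,\<rho>), (B,\<sigma>), S)) \<Longrightarrow>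
      dle (qdoc C D) (ccod (qcat C D) ((A,\<rho>), (B,\<sigma>), S)) x y \<Longrightarrow>
      dle (qdoc C D) (ccod (qcat C D) ((A,\<rho>), (B,\<sigma>), S)) y x \<Longrightarrow> x = y"
    using dle_antisym[OF B] descent_Pr by (auto simp: qdoc_Pr)
  show "\<forall>\<gamma>\<in>dPr (qdoc C D) (ccod (qcat C D) ((A,\<rho>), (B,\<sigma>), S)).
      dle (qdoc C D) (ccod (qcat C D) ((A,\<rho>), (B,\<sigma>), S)) \<beta> \<gamma> \<longleftrightarrow>
      dle (qdoc C D) (cdom (qcat C D) ((A,\<rho>), (B,\<sigma>), S)) \<alpha> (dre (qdoc C D) ((A,\<rho>), (B,\<sigma>), S) \<gamma>)"
    using adj dre_represents[OF _ _ f] objs by (simp add: qdoc_Pr)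
qed (use objs \<beta> descent_Pr in \<open>auto simp: qdoc_Pr\<close>)

lemma qdoc_allL_eqI:
  assumes objs: "(A,\<rho>) \<in> qobjs C D" "(B,\<sigma>) \<in> qobjs C D" and f: "represents f ((A,\<rho>), (B,\<sigma>), S)"
    and \<beta>: "descent B \<sigma> \<beta>" and adj: "\<And>\<gamma>. descent B \<sigma> \<gamma> \<Longrightarrow> dle D B \<gamma> \<beta> \<longleftrightarrow> dle D A (dre D f \<gamma>) \<alpha>"
  shows "allL (qcat C D) (qdoc C D) ((A,\<rho>), (B,\<sigma>), S) \<alpha> = \<beta>"
proof (rule allL_eqI)
  have B: "B \<in> cObj C" using objs by simp
  show "\<And>x y. x \<in> dPr (qdoc C D) (ccod (qcat C D) ((A,\<rho>), (B,\<sigma>), S)) \<Longrightarrow>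
      y \<in> dPr (qdoc C D) (ccod (qcat C D) ((A,\<rho>), (B,\<sigma>), S)) \<Longrightarrow>
      dle (qdoc C D) (ccod (qcat C D) ((A,\<rho>), (B,\<sigma>), S)) x y \<Longrightarrow>
      dle (qdoc C D) (ccod (qcat C D) ((A,\<rho>), (B,\<sigma>), S)) y x \<Longrightarrow> x = y"
    using dle_antisym[OF B] descent_Pr by (auto simp: qdoc_Pr)
  show "\<forall>\<gamma>\<in>dPr (qdoc C D) (ccod (qcat C D) ((A,\<rho>), (B,\<sigma>), S)).
      dle (qdoc C D) (ccod (qcat C D) ((A,\<rho>), (B,\<sigma>), S)) \<gamma> \<beta> \<longleftrightarrow>
      dle (qdoc C D) (cdom (qcat C D) ((A,\<rho>), (B,\<sigma>), S)) (dre (qdoc C D) ((A,\<rho>), (B,\<sigma>), S) \<gamma>) \<alpha>"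
    using adj dre_represents[OF _ _ f] objs by (simp add: qdoc_Pr)
qed (use objs \<beta> descent_Pr in \<open>auto simp: qdoc_Pr\<close>)

end

lemma (in elementary_doctrine) represents_qbang: "(A,\<rho>) \<in> qobjs C D \<Longrightarrow> represents (cbang C A) (qbang C D (A,\<rho>))"
  unfolding qbang_def using represents_class[OF qpres_bang] by simp

section \<open>Quantifiers of the quotient doctrine\<close>

context quantified_doctrine
begin

lemma descent_allL_pr1:
  assumes W: "W \<in> cObj C" and A: "A \<in> cObj C" and \<omega>: "per_equiv C D W \<omega>"
    and R: "descent (cprod C W A) (qprodrel C D W A \<omega> (deq D A)) R"
  shows "descent W \<omega> (allL C D (cpr1 C W A) R)"
proof -
  have \<omega>Pr: "\<omega> \<in> dPr D (cprod C W W)" using per_equiv_Pr[OF \<omega>] .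
  have RPr: "R \<in> dPr D (cprod C W A)" using descent_Pr[OF R] .
  let ?\<Phi> = "allL C D (cpr1 C W A) R"
  have \<Phi>Pr: "?\<Phi> \<in> dPr D W" using W A RPr by simp
  let ?WW = "cprod C W W"
  let ?X = "cprod C ?WW A"
  let ?q = "cpr1 C ?WW A" and ?a = "cpr2 C ?WW A"
  let ?u1 = "ccomp C (cpr1 C W W) ?q" and ?u2 = "ccomp C (cpr2 C W W) ?q"
  let ?y = "cpair C ?u1 ?a" and ?y' = "cpair C ?u2 ?a"
  let ?L = "pmeet D ?X (dre D ?u1 ?\<Phi>) (dre D (cpair C ?u1 ?u2) \<omega>)"
  have Pr: "?L \<in> dPr D ?X" "dre D ?y R \<in> dPr D ?X" "dre D ?y' R \<in> dPr D ?X"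
    "dre D (cpair C ?a ?a) (deq D A) \<in> dPr D ?X" "dre D ?u1 ?\<Phi> \<in> dPr D ?X" "dre D (cpair C ?u1 ?u2) \<omega> \<in> dPr D ?X"
    using W A \<omega>Pr RPr \<Phi>Pr by simp_all
  have \<Phi>_y: "dle D ?X (dre D ?u1 ?\<Phi>) (dre D ?y R)"
    using allL_pr1_elim[OF W A RPr, of ?u1 ?a] W A by simp
  have L_y: "dle D ?X ?L (dre D ?y R)"
    by (rule dle_trans[OF pmeet_le1 \<Phi>_y]) (use W A Pr in simp_all)
  have "dle D ?X (ptop D ?X) (dre D (cpair C ?a ?a) (deq D A))"
    using deq_refl[of ?a A] W A by simp
  then have L_a: "dle D ?X ?L (dre D (cpair C ?a ?a) (deq D A))"
    by (rule dle_from_ptop) (use W A Pr in simp_all)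
  have "dle D ?X ?L (pmeet D ?X (dre D (cpair C ?u1 ?u2) \<omega>) (dre D (cpair C ?a ?a) (deq D A)))"
    by (rule le_pmeetI[OF pmeet_le2 L_a]) (use W A Pr in simp_all)
  then have "dle D ?X ?L (dre D (cpair C ?y ?y') (qprodrel C D W A \<omega> (deq D A)))"
    using dre_qprodrel[of W A \<omega> "deq D A" ?y ?y'] W A \<omega>Pr by simp
  moreover have "dle D ?X (pmeet D ?X (dre D ?y R) (dre D (cpair C ?y ?y') (qprodrel C D W A \<omega> (deq D A))))
      (dre D ?y' R)"
    using descent_at[OF R _, of ?y ?y'] W A \<omega>Pr by simp
  ultimately have "dle D ?X ?L (dre D ?y' R)"
    by (rule le_pmeet_trans[OF L_y]) (use W A \<omega>Pr Pr in simp_all)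
  then have "dle D ?WW (pmeet D ?WW (dre D (cpr1 C W W) ?\<Phi>) \<omega>) (dre D (cpr2 C W W) ?\<Phi>)"
    using allL_pr1_intro[OF W A RPr, of "cpr2 C W W" "pmeet D ?WW (dre D (cpr1 C W W) ?\<Phi>) \<omega>"] W A \<omega>Pr \<Phi>Pr
    by simp
  then show ?thesis unfolding descent_def using \<Phi>Pr by simp
qed

lemma qbang_eq: "qbang C D (A,\<rho>) = ((A,\<rho>), (cterm C, deq D (cterm C)), qclass C D (A,\<rho>) (qterm C D) (cbang C A))"
  by (simp add: qbang_def qterm_def)

lemma qdoc_exL_qpr1:
  assumes A: "A \<in> cObj C" and B: "(B,\<sigma>) \<in> qobjs C D"
    and R: "descent (cprod C A B) (qprodrel C D A B (deq D A) \<sigma>) R"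
  shows "exL (qcat C D) (qdoc C D) (qpr1 C D (A, deq D A) (B,\<sigma>)) R = exL C D (cpr1 C A B) R"
proof -
  have Ao: "(A, deq D A) \<in> qobjs C D" using A per_equiv_deq by simp
  have Bo: "B \<in> cObj C" using B by simp
  have RPr: "R \<in> dPr D (cprod C A B)" using descent_Pr[OF R] .
  have "qpr1 C D (A, deq D A) (B,\<sigma>) = ((cprod C A B, qprodrel C D A B (deq D A) \<sigma>), (A, deq D A),
      qclass C D (qprod C D (A, deq D A) (B,\<sigma>)) (A, deq D A) (cpr1 C A B))"
    by (simp add: qpr1_def qprod_def)
  moreover have "exL (qcat C D) (qdoc C D) ((cprod C A B, qprodrel C D A B (deq D A) \<sigma>), (A, deq D A),
      qclass C D (qprod C D (A, deq D A) (B,\<sigma>)) (A, deq D A) (cpr1 C A B)) R = exL C D (cpr1 C A B) R"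
  proof (rule qdoc_exL_eqI)
    show "(cprod C A B, qprodrel C D A B (deq D A) \<sigma>) \<in> qobjs C D"
      using qprod_obj[OF Ao B] by (simp add: qprod_def)
    show "represents (cpr1 C A B) ((cprod C A B, qprodrel C D A B (deq D A) \<sigma>), (A, deq D A),
      qclass C D (qprod C D (A, deq D A) (B,\<sigma>)) (A, deq D A) (cpr1 C A B))"
      using represents_qpr1[OF Ao B] by (simp add: qpr1_def qprod_def)
    show "descent A (deq D A) (exL C D (cpr1 C A B) R)"
      using descent_deq A Bo RPr by simp
    show "dle D A (exL C D (cpr1 C A B) R) \<gamma> \<longleftrightarrow> dle D (cprod C A B) R (dre D (cpr1 C A B) \<gamma>)"
      if "descent A (deq D A) \<gamma>" for \<gamma>
      using exL_pr1_adjoint[OF A Bo RPr] descent_Pr[OF that] by blast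
  qed (use Ao in simp)
  ultimately show ?thesis by simp
qed

lemma qdoc_allL_qpr1:
  assumes W: "(W,\<omega>) \<in> qobjs C D" and A: "A \<in> cObj C"
    and R: "descent (cprod C W A) (qprodrel C D W A \<omega> (deq D A)) R"
  shows "allL (qcat C D) (qdoc C D) (qpr1 C D (W,\<omega>) (A, deq D A)) R = allL C D (cpr1 C W A) R"
proof -
  have Ao: "(A, deq D A) \<in> qobjs C D" using A per_equiv_deq by simp
  have Wo: "W \<in> cObj C" "per_equiv C D W \<omega>" using W by simp_all
  have RPr: "R \<in> dPr D (cprod C W A)" using descent_Pr[OF R] .
  have "qpr1 C D (W,\<omega>) (A, deq D A) = ((cprod C W A, qprodrel C D W A \<omega> (deq D A)), (W,\<omega>),
      qclass C D (qprod C D (W,\<omega>) (A, deq D A)) (W,\<omega>) (cpr1 C W A))"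
    by (simp add: qpr1_def qprod_def)
  moreover have "allL (qcat C D) (qdoc C D) ((cprod C W A, qprodrel C D W A \<omega> (deq D A)), (W,\<omega>),
      qclass C D (qprod C D (W,\<omega>) (A, deq D A)) (W,\<omega>) (cpr1 C W A)) R = allL C D (cpr1 C W A) R"
  proof (rule qdoc_allL_eqI)
    show "(cprod C W A, qprodrel C D W A \<omega> (deq D A)) \<in> qobjs C D"
      using qprod_obj[OF W Ao] by (simp add: qprod_def)
    show "represents (cpr1 C W A) ((cprod C W A, qprodrel C D W A \<omega> (deq D A)), (W,\<omega>),
      qclass C D (qprod C D (W,\<omega>) (A, deq D A)) (W,\<omega>) (cpr1 C W A))"
      using represents_qpr1[OF W Ao] by (simp add: qpr1_def qprod_def)
    show "descent W \<omega> (allL C D (cpr1 C W A) R)"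
      using descent_allL_pr1[OF Wo(1) A Wo(2) R] .
    show "dle D W \<gamma> (allL C D (cpr1 C W A) R) \<longleftrightarrow> dle D (cprod C W A) (dre D (cpr1 C W A) \<gamma>) R"
      if "descent W \<omega> \<gamma>" for \<gamma>
      using allL_pr1_adjoint[OF Wo(1) A RPr] descent_Pr[OF that] by blast
  qed (use W in simp)
  ultimately show ?thesis by simp
qed

lemma qdoc_exL_qbang:
  assumes W: "(W,\<omega>) \<in> qobjs C D" and \<Phi>: "descent W \<omega> \<Phi>"
  shows "exL (qcat C D) (qdoc C D) (qbang C D (W,\<omega>)) \<Phi> = exL C D (cbang C W) \<Phi>"
  unfolding qbang_eq
proof (rule qdoc_exL_eqI[OF W _ represents_qbang[OF W, unfolded qbang_eq]])
  have Wo: "W \<in> cObj C" using W by simp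
  have \<Phi>Pr: "\<Phi> \<in> dPr D W" using descent_Pr[OF \<Phi>] .
  show "descent (cterm C) (deq D (cterm C)) (exL C D (cbang C W) \<Phi>)"
    using descent_deq exL_bang_adjoint[OF Wo \<Phi>Pr] by simp
  show "dle D (cterm C) (exL C D (cbang C W) \<Phi>) \<gamma> \<longleftrightarrow> dle D W \<Phi> (dre D (cbang C W) \<gamma>)"
    if "descent (cterm C) (deq D (cterm C)) \<gamma>" for \<gamma>
    using exL_bang_adjoint[OF Wo \<Phi>Pr] descent_Pr[OF that] by blast
qed (use per_equiv_deq in simp)

lemma qdoc_allL_qbang:
  assumes A: "(A,\<rho>) \<in> qobjs C D" and \<alpha>: "descent A \<rho> \<alpha>"
  shows "allL (qcat C D) (qdoc C D) (qbang C D (A,\<rho>)) \<alpha> = allL C D (cbang C A) \<alpha>"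
  unfolding qbang_eq
proof (rule qdoc_allL_eqI[OF A _ represents_qbang[OF A, unfolded qbang_eq]])
  have Ao: "A \<in> cObj C" using A by simp
  have \<alpha>Pr: "\<alpha> \<in> dPr D A" using descent_Pr[OF \<alpha>] .
  show "descent (cterm C) (deq D (cterm C)) (allL C D (cbang C A) \<alpha>)"
    using descent_deq allL_bang_adjoint[OF Ao \<alpha>Pr] by simp
  show "dle D (cterm C) \<gamma> (allL C D (cbang C A) \<alpha>) \<longleftrightarrow> dle D A (dre D (cbang C A) \<gamma>) \<alpha>"
    if "descent (cterm C) (deq D (cterm C)) \<gamma>" for \<gamma>
    using allL_bang_adjoint[OF Ao \<alpha>Pr] descent_Pr[OF that] by blast
qed (use per_equiv_deq in simp)

end

section \<open>The axiom of choice\<close>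

definition choice_premise :: "('o,'a) cat \<Rightarrow> ('o,'a,'p) doctrine \<Rightarrow> 'o \<Rightarrow> 'o \<Rightarrow> 'p \<Rightarrow> 'p" where
  "choice_premise C D A B R = allL C D (cbang C A) (exL C D (cpr1 C A B) R)"

definition choice_conclusion :: "('o,'a) cat \<Rightarrow> ('o,'a,'p) doctrine \<Rightarrow> 'o \<Rightarrow> 'o \<Rightarrow> 'a \<Rightarrow> 'p \<Rightarrow> 'p" where
  "choice_conclusion C D W A ev R =
     exL C D (cbang C W) (allL C D (cpr1 C W A) (dre D (cpair C (cpr2 C W A) ev) R))"

lemma AC_iff: "AC C D A \<longleftrightarrow> (\<forall>B\<in>cObj C. \<forall>R\<in>dPr D (cprod C A B). \<forall>W ev. weak_eval C A B W ev \<longrightarrow>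
    dle D (cterm C) (choice_premise C D A B R) (choice_conclusion C D W A ev R))"
  unfolding AC_def choice_premise_def choice_conclusion_def ..

context quantified_doctrine
begin

lemma choice_premise_Pr: "A \<in> cObj C \<Longrightarrow> B \<in> cObj C \<Longrightarrow> R \<in> dPr D (cprod C A B) \<Longrightarrow>
    choice_premise C D A B R \<in> dPr D (cterm C)"
  unfolding choice_premise_def using allL_bang_adjoint by simp

lemma choice_conclusion_Pr: "W \<in> cObj C \<Longrightarrow> A \<in> cObj C \<Longrightarrow> R \<in> dPr D (cprod C A B) \<Longrightarrow>
    e \<in> hom C (cprod C W A) B \<Longrightarrow> choice_conclusion C D W A e R \<in> dPr D (cterm C)"
  unfolding choice_conclusion_def using exL_bang_adjoint by (simp add: hom_def)

lemma choice_conclusion_reindex_le: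
  assumes W0: "W0 \<in> cObj C" and A: "A \<in> cObj C" and R: "R \<in> dPr D (cprod C A B)"
    and e: "e \<in> hom C (cprod C W A) B" and g: "g \<in> hom C W0 W"
  shows "dle D (cterm C) (choice_conclusion C D W0 A (ccomp C e (ptimes C W0 A g (cid C A))) R)
    (choice_conclusion C D W A e R)"
proof -
  have arrs: "e \<in> cArr C" "cdom C e = cprod C W A" "ccod C e = B" "g \<in> cArr C" "cdom C g = W0" "ccod C g = W"
    using e g by (auto simp: hom_def)
  then have W: "W \<in> cObj C" and B: "B \<in> cObj C" by auto
  let ?\<Psi> = "dre D (cpair C (cpr2 C W A) e) R"
  let ?\<Phi> = "allL C D (cpr1 C W A) ?\<Psi>"
  have \<Psi>Pr: "?\<Psi> \<in> dPr D (cprod C W A)" using W A B R arrs by simp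
  then have \<Phi>Pr: "?\<Phi> \<in> dPr D W" using W A by simp
  have \<Phi>g: "dre D g ?\<Phi> = allL C D (cpr1 C W0 A)
      (dre D (cpair C (cpr2 C W0 A) (ccomp C e (ptimes C W0 A g (cid C A)))) R)"
    using dre_allL_pr1[OF W A arrs(4,6) \<Psi>Pr] W0 W A B R arrs by (simp add: ptimes_def)
  let ?E = "exL C D (cbang C W) ?\<Phi>"
  have E: "?E \<in> dPr D (cterm C)"
    and unit: "dle D W ?\<Phi> (dre D (cbang C W) ?E)"
    using exL_bang_adjoint[OF W \<Phi>Pr] dle_refl[OF term_obj, of ?E] by blast+
  have "dle D (cdom C g) (dre D g ?\<Phi>) (dre D g (dre D (cbang C W) ?E))"
    by (rule dre_mono) (use arrs E unit \<Phi>Pr W in simp_all)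
  then have "dle D W0 (dre D g ?\<Phi>) (dre D (cbang C W0) ?E)"
    using arrs E W by simp
  then have "dle D (cterm C) (exL C D (cbang C W0) (dre D g ?\<Phi>)) ?E"
    using exL_bang_adjoint[OF W0, of "dre D g ?\<Phi>"] E arrs \<Phi>Pr by simp
  then show ?thesis unfolding choice_conclusion_def \<Phi>g .
qed

lemma choice_conclusion_qrel_eq:
  assumes objs: "(W,\<omega>) \<in> qobjs C D" "A \<in> cObj C" "(B,\<sigma>) \<in> qobjs C D"
    and e: "qpres C D (qprod C D (W,\<omega>) (A, deq D A)) (B,\<sigma>) e" "qpres C D (qprod C D (W,\<omega>) (A, deq D A)) (B,\<sigma>) e'"
      "qrel C D (qprod C D (W,\<omega>) (A, deq D A)) (B,\<sigma>) e e'"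
    and R: "descent (cprod C A B) (qprodrel C D A B (deq D A) \<sigma>) R"
  shows "choice_conclusion C D W A e R = choice_conclusion C D W A e' R"
proof -
  let ?X = "(cprod C W A, qprodrel C D W A \<omega> (deq D A))"
  let ?Y = "(cprod C A B, qprodrel C D A B (deq D A) \<sigma>)"
  have X: "qprod C D (W,\<omega>) (A, deq D A) = ?X" "qprod C D (A, deq D A) (B,\<sigma>) = ?Y"
    by (simp_all add: qprod_def)
  have Ao: "(A, deq D A) \<in> qobjs C D" using objs per_equiv_deq by simp
  have Xo: "?X \<in> qobjs C D" and Yo: "?Y \<in> qobjs C D"
    using qprod_obj[OF objs(1) Ao] qprod_obj[OF Ao objs(3)] X by simp_all
  have eX: "qpres C D ?X (B,\<sigma>) e" "qpres C D ?X (B,\<sigma>) e'" "qrel C D ?X (B,\<sigma>) e e'"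
    using e X by simp_all
  have pr2: "qpres C D ?X (A, deq D A) (cpr2 C W A)" using qpres_pr2[OF objs(1) Ao] X by simp
  have pairs: "qpres C D ?X ?Y (cpair C (cpr2 C W A) e)" "qpres C D ?X ?Y (cpair C (cpr2 C W A) e')"
    using qpres_pair[OF Xo Ao objs(3) pr2 eX(1)] qpres_pair[OF Xo Ao objs(3) pr2 eX(2)] X by simp_all
  have "qrel C D ?X ?Y (cpair C (cpr2 C W A) e) (cpair C (cpr2 C W A) e')"
    using qrel_pair[of "qprodrel C D W A \<omega> (deq D A)" "cprod C W A" "deq D A" A \<sigma> B] pr2 eX Xo Ao objs X
    by (simp add: qpres_iff per_equiv_Pr)
  then have "dre D (cpair C (cpr2 C W A) e) R = dre D (cpair C (cpr2 C W A) e') R"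
    using dre_qrel_eq[of "cprod C W A" "qprodrel C D W A \<omega> (deq D A)" "cprod C A B"
        "qprodrel C D A B (deq D A) \<sigma>" "cpair C (cpr2 C W A) e" "cpair C (cpr2 C W A) e'" R] pairs Xo Yo R
    by (simp add: qpres_iff)
  then show ?thesis unfolding choice_conclusion_def by simp
qed

lemma qdoc_choice_premise:
  assumes A: "A \<in> cObj C" and B: "(B,\<sigma>) \<in> qobjs C D"
    and R: "R \<in> dPr (qdoc C D) (qprod C D (A, deq D A) (B,\<sigma>))"
  shows "choice_premise (qcat C D) (qdoc C D) (A, deq D A) (B,\<sigma>) R = choice_premise C D A B R"
proof -
  have Rd: "descent (cprod C A B) (qprodrel C D A B (deq D A) \<sigma>) R"
    using R by (simp add: qdoc_Pr qprod_def)
  have "exL C D (cpr1 C A B) R \<in> dPr D A"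
    using A B descent_Pr[OF Rd] by simp
  then show ?thesis
    unfolding choice_premise_def qcat_sel qdoc_exL_qpr1[OF A B Rd]
    using qdoc_allL_qbang[of A "deq D A"] A per_equiv_deq descent_deq by simp
qed

lemma qdoc_choice_conclusion:
  assumes A: "A \<in> cObj C" and W: "(W,\<omega>) \<in> qobjs C D" and B: "(B,\<sigma>) \<in> qobjs C D"
    and ev: "ev \<in> hom (qcat C D) (qprod C D (W,\<omega>) (A, deq D A)) (B,\<sigma>)" and e: "represents e ev"
    and R: "R \<in> dPr (qdoc C D) (qprod C D (A, deq D A) (B,\<sigma>))"
  shows "choice_conclusion (qcat C D) (qdoc C D) (W,\<omega>) (A, deq D A) ev R = choice_conclusion C D W A e R"
proof -
  let ?X = "(cprod C W A, qprodrel C D W A \<omega> (deq D A))"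
  let ?Y = "(cprod C A B, qprodrel C D A B (deq D A) \<sigma>)"
  have X: "qprod C D (W,\<omega>) (A, deq D A) = ?X" "qprod C D (A, deq D A) (B,\<sigma>) = ?Y"
    by (simp_all add: qprod_def)
  have Ao: "(A, deq D A) \<in> qobjs C D" using A per_equiv_deq by simp
  have Xo: "?X \<in> qobjs C D" and Yo: "?Y \<in> qobjs C D"
    using qprod_obj[OF W Ao] qprod_obj[OF Ao B] X by simp_all
  have Rd: "descent (cprod C A B) (qprodrel C D A B (deq D A) \<sigma>) R"
    using R X by (simp add: qdoc_Pr)
  obtain S where S: "ev = (?X, (B,\<sigma>), S)" using qcat_hom_triple[OF ev] X by auto
  have pr2: "represents (cpr2 C W A) (qpr2 C D (W,\<omega>) (A, deq D A))"
    using represents_qpr2[OF W Ao] .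
  obtain SP where P: "qpair C D (qpr2 C D (W,\<omega>) (A, deq D A)) ev = (?X, ?Y, SP)"
    using S by (simp add: qpair_def qpr2_def qprod_def Let_def)
  have "represents (cpair C (cpr2 C W A) e) (qpair C D (qpr2 C D (W,\<omega>) (A, deq D A)) ev)"
    using represents_qpair[OF Xo Ao B, of "cpr2 C W A" _ e S] pr2 e S
    by (simp add: qpr2_def qprod_def)
  then have pair: "represents (cpair C (cpr2 C W A) e) (?X, ?Y, SP)"
    unfolding P .
  let ?R' = "dre D (cpair C (cpr2 C W A) e) R"
  have R': "dre (qdoc C D) (qpair C D (qpr2 C D (W,\<omega>) (A, deq D A)) ev) R = ?R'"
    unfolding P using dre_represents[OF _ _ pair Rd] Xo Yo by simp
  have R'd: "descent (cprod C W A) (qprodrel C D W A \<omega> (deq D A)) ?R'"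
    using descent_dre[OF _ _ _ Rd] pair Xo Yo unfolding represents_def by simp
  have \<Phi>d: "descent W \<omega> (allL C D (cpr1 C W A) ?R')"
    using descent_allL_pr1[OF _ A _ R'd] W by simp
  show ?thesis
    unfolding choice_conclusion_def qcat_sel R' qdoc_allL_qpr1[OF W A R'd] qdoc_exL_qbang[OF W \<Phi>d] ..
qed

lemma weak_eval_qcat_factor:
  assumes A: "A \<in> cObj C" and B: "(B,\<sigma>) \<in> qobjs C D"
    and ev: "weak_eval (qcat C D) (A, deq D A) (B,\<sigma>) (W,\<omega>) ev"
    and W0: "W0 \<in> cObj C" and ev0: "ev0 \<in> hom C (cprod C W0 A) B"
  obtains g where "g \<in> hom C W0 W"
    and "qrel C D (qprod C D (W0, deq D W0) (A, deq D A)) (B,\<sigma>) ev0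
      (ccomp C (qrep ev) (ptimes C W0 A g (cid C A)))"
proof -
  let ?Z = "(W0, deq D W0)" and ?A = "(A, deq D A)"
  let ?X = "(cprod C W0 A, qprodrel C D W0 A (deq D W0) (deq D A))"
  let ?Y = "(cprod C W A, qprodrel C D W A \<omega> (deq D A))"
  have W: "(W,\<omega>) \<in> qobjs C D" and ev_hom: "ev \<in> hom (qcat C D) ?Y (B,\<sigma>)"
    using ev unfolding weak_eval_def by (simp_all add: qprod_def)
  have factor: "\<forall>Z\<in>qobjs C D. \<forall>H\<in>hom (qcat C D) (qprod C D Z ?A) (B,\<sigma>). \<exists>G\<in>hom (qcat C D) Z (W,\<omega>).
      H = qcomp C D ev (ptimes (qcat C D) Z ?A G (qid C D ?A))"
    using ev unfolding weak_eval_def qcat_sel by blast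
  have Zo: "?Z \<in> qobjs C D" and Ao: "?A \<in> qobjs C D" using W0 A per_equiv_deq by simp_all
  have Xo: "?X \<in> qobjs C D" and Yo: "?Y \<in> qobjs C D"
    using qprod_obj[OF Zo Ao] qprod_obj[OF W Ao] by (simp_all add: qprod_def)
  have per: "per_equiv C D (cprod C W0 A) (qprodrel C D W0 A (deq D W0) (deq D A))" "per_equiv C D B \<sigma>"
    using Xo B by simp_all
  have "qpres C D ?X (B,\<sigma>) ev0"
    using qpres_from_deq_prod[OF W0 A _ ev0] B by (simp add: qprod_def)
  then have H: "represents ev0 (?X, (B,\<sigma>), qclass C D ?X (B,\<sigma>) ev0)"
    by (rule represents_class)
  have "(?X, (B,\<sigma>), qclass C D ?X (B,\<sigma>) ev0) \<in> hom (qcat C D) (qprod C D ?Z ?A) (B,\<sigma>)"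
    using qcat_homI[OF Xo B H] by (simp add: qprod_def)
  then obtain G where G: "G \<in> hom (qcat C D) ?Z (W,\<omega>)"
    and HG: "(?X, (B,\<sigma>), qclass C D ?X (B,\<sigma>) ev0) = qcomp C D ev (ptimes (qcat C D) ?Z ?A G (qid C D ?A))"
    using factor Zo by blast
  obtain SG where SG: "G = (?Z, (W,\<omega>), SG)" using qcat_hom_triple[OF G] by blast
  obtain Sev where Sev: "ev = (?Y, (B,\<sigma>), Sev)" using qcat_hom_triple[OF ev_hom] by blast
  let ?g = "qrep G"
  have g: "represents ?g (?Z, (W,\<omega>), SG)" using represents_qrep_hom[OF G] SG by simp
  have "represents (ptimes C W0 A ?g (cid C A)) (ptimes (qcat C D) ?Z ?A G (qid C D ?A))"
    using represents_ptimes[OF Zo W Ao Ao g represents_qid[OF Ao, unfolded qid_def]] SG by (simp add: qid_def)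
  moreover obtain SK where SK: "ptimes (qcat C D) ?Z ?A G (qid C D ?A) = (?X, ?Y, SK)"
    using SG by (simp add: ptimes_def qpair_def qcomp_def qpr1_def qprod_def qid_def Let_def)
  ultimately have "represents (ccomp C (qrep ev) (ptimes C W0 A ?g (cid C A)))
      (qcomp C D ev (ptimes (qcat C D) ?Z ?A G (qid C D ?A)))"
    using represents_qcomp[OF Xo Yo B _ represents_qrep_hom[OF ev_hom, unfolded Sev]] Sev by simp
  then have "qrel C D ?X (B,\<sigma>) ev0 (ccomp C (qrep ev) (ptimes C W0 A ?g (cid C A)))"
    using represents_qrel[OF per H] HG by simp
  moreover have "?g \<in> hom C W0 W" using g by (simp add: represents_def qpres_iff)
  ultimately show ?thesis using that by (simp add: qprod_def)
qed

lemma AC_qdoc_if_AC: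
  assumes A: "A \<in> cObj C" and AC: "AC C D A"
  shows "AC (qcat C D) (qdoc C D) (A, deq D A)"
  unfolding AC_iff[of "qcat C D"] qcat_sel
proof (intro ballI allI impI)
  fix Bs R Ws ev
  assume Bs: "Bs \<in> qobjs C D" and R: "R \<in> dPr (qdoc C D) (qprod C D (A, deq D A) Bs)"
    and ev: "weak_eval (qcat C D) (A, deq D A) Bs Ws ev"
  obtain B \<sigma> W \<omega> where BW: "Bs = (B,\<sigma>)" "Ws = (W,\<omega>)" by fastforce
  have B: "(B,\<sigma>) \<in> qobjs C D" and W: "(W,\<omega>) \<in> qobjs C D"
    and ev_hom: "ev \<in> hom (qcat C D) (qprod C D (W,\<omega>) (A, deq D A)) (B,\<sigma>)"
    using Bs ev BW unfolding weak_eval_def by auto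
  have Rd: "descent (cprod C A B) (qprodrel C D A B (deq D A) \<sigma>) R" and RPr: "R \<in> dPr D (cprod C A B)"
    using R BW descent_Pr by (auto simp: qdoc_Pr qprod_def)
  define e where "e = qrep ev"
  have e_hom: "e \<in> hom C (cprod C W A) B"
    using qrep_qpres[OF ev_hom] unfolding e_def by (simp add: qpres_iff qprod_def)
  have Bo: "B \<in> cObj C" using B by simp
  obtain W0 ev0 where we0: "weak_eval C A B W0 ev0" using weakly_cc A Bo unfolding weakly_cc_def by blast
  then have W0: "W0 \<in> cObj C" and ev0: "ev0 \<in> hom C (cprod C W0 A) B" unfolding weak_eval_def by auto
  obtain g where g: "g \<in> hom C W0 W" and rel: "qrel C D (qprod C D (W0, deq D W0) (A, deq D A)) (B,\<sigma>) ev0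
      (ccomp C e (ptimes C W0 A g (cid C A)))"
    using weak_eval_qcat_factor[OF A B ev[unfolded BW] W0 ev0] unfolding e_def .
  let ?e0 = "ccomp C e (ptimes C W0 A g (cid C A))"
  have e0: "?e0 \<in> hom C (cprod C W0 A) B"
    using e_hom g A W0 by (auto simp: hom_def ptimes_def)
  have "dle D (cterm C) (choice_premise C D A B R) (choice_conclusion C D W0 A ev0 R)"
    using AC we0 Bo RPr unfolding AC_iff by blast
  also have "choice_conclusion C D W0 A ev0 R = choice_conclusion C D W0 A ?e0 R"
    using choice_conclusion_qrel_eq[OF _ A B _ _ rel Rd] qpres_from_deq_prod[OF W0 A _ ev0]
      qpres_from_deq_prod[OF W0 A _ e0] W0 B per_equiv_deq by simp
  finally have "dle D (cterm C) (choice_premise C D A B R) (choice_conclusion C D W A e R)"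
    by (rule dle_trans[OF _ choice_conclusion_reindex_le[OF W0 A RPr e_hom g]])
      (use A Bo W0 W RPr e_hom e0 choice_premise_Pr choice_conclusion_Pr in auto)
  then show "dle (qdoc C D) (qterm C D) (choice_premise (qcat C D) (qdoc C D) (A, deq D A) Bs R)
      (choice_conclusion (qcat C D) (qdoc C D) Ws (A, deq D A) ev R)"
    using qdoc_choice_premise[OF A B] qdoc_choice_conclusion[OF A W B ev_hom represents_qrep_hom[OF ev_hom]] e_def
      R BW by (simp add: qterm_def)
qed

definition ev_equiv :: "'o \<Rightarrow> 'o \<Rightarrow> 'o \<Rightarrow> 'a \<Rightarrow> 'p" where
  "ev_equiv W A B ev = allL C D (cpr1 C (cprod C W W) A)
     (dre D (cpair C (ccomp C ev (cpair C (ccomp C (cpr1 C W W) (cpr1 C (cprod C W W) A)) (cpr2 C (cprod C W W) A)))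
                     (ccomp C ev (cpair C (ccomp C (cpr2 C W W) (cpr1 C (cprod C W W) A)) (cpr2 C (cprod C W W) A))))
       (deq D B))"

context
  fixes W A B ev
  assumes W: "W \<in> cObj C" and A: "A \<in> cObj C" and ev: "ev \<in> hom C (cprod C W A) B"
begin

lemma ev_arrs: "ev \<in> cArr C" "cdom C ev = cprod C W A" "ccod C ev = B" "B \<in> cObj C"
  using ev by (auto simp: hom_def)

lemma ev_equiv_body_Pr: "dre D (cpair C (ccomp C ev (cpair C (ccomp C (cpr1 C W W) (cpr1 C (cprod C W W) A)) (cpr2 C (cprod C W W) A)))
    (ccomp C ev (cpair C (ccomp C (cpr2 C W W) (cpr1 C (cprod C W W) A)) (cpr2 C (cprod C W W) A)))) (deq D B) \<in> dPr D (cprod C (cprod C W W) A)"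
  using W A ev_arrs by simp

lemma ev_equiv_Pr: "ev_equiv W A B ev \<in> dPr D (cprod C W W)"
  unfolding ev_equiv_def using W A ev_arrs by simp

lemma ev_equiv_elim:
  assumes y: "y \<in> cArr C" "y' \<in> cArr C" "a \<in> cArr C" "cdom C y' = cdom C y" "cdom C a = cdom C y"
    "ccod C y = W" "ccod C y' = W" "ccod C a = A"
  shows "dle D (cdom C y) (dre D (cpair C y y') (ev_equiv W A B ev))
    (dre D (cpair C (ccomp C ev (cpair C y a)) (ccomp C ev (cpair C y' a))) (deq D B))"
  unfolding ev_equiv_def
  using allL_pr1_elim[OF _ A ev_equiv_body_Pr, of "cpair C y y'" a] W A y ev_arrs by simp

lemma ev_equiv_intro:
  assumes y: "y \<in> cArr C" "y' \<in> cArr C" "cdom C y' = cdom C y" "ccod C y = W" "ccod C y' = W"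
    and \<psi>: "\<psi> \<in> dPr D (cdom C y)"
    and le: "dle D (cprod C (cdom C y) A) (dre D (cpr1 C (cdom C y) A) \<psi>)
      (dre D (cpair C (ccomp C ev (cpair C (ccomp C y (cpr1 C (cdom C y) A)) (cpr2 C (cdom C y) A)))
                      (ccomp C ev (cpair C (ccomp C y' (cpr1 C (cdom C y) A)) (cpr2 C (cdom C y) A)))) (deq D B))"
  shows "dle D (cdom C y) \<psi> (dre D (cpair C y y') (ev_equiv W A B ev))"
  unfolding ev_equiv_def
  using allL_pr1_intro[OF _ A ev_equiv_body_Pr, of "cpair C y y'" \<psi>] W A y \<psi> le ev_arrs by simp

lemma ev_equiv_refl:
  assumes y: "y \<in> cArr C" "ccod C y = W"
  shows "dle D (cdom C y) (ptop D (cdom C y)) (dre D (cpair C y y) (ev_equiv W A B ev))"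
proof -
  let ?t = "ccomp C ev (cpair C (ccomp C y (cpr1 C (cdom C y) A)) (cpr2 C (cdom C y) A))"
  have "dle D (cdom C ?t) (ptop D (cdom C ?t)) (dre D (cpair C ?t ?t) (deq D B))"
    by (rule deq_refl) (use y A ev_arrs in simp_all)
  then show ?thesis
    using ev_equiv_intro[OF y(1) y(1) refl y(2) y(2), of "ptop D (cdom C y)"] y A ev_arrs by simp
qed

lemma ev_equiv_sym:
  assumes y: "y \<in> cArr C" "y' \<in> cArr C" "cdom C y' = cdom C y" "ccod C y = W" "ccod C y' = W"
  shows "dle D (cdom C y) (dre D (cpair C y y') (ev_equiv W A B ev)) (dre D (cpair C y' y) (ev_equiv W A B ev))"
proof -
  let ?X = "cdom C y"
  let ?p1 = "cpr1 C ?X A" and ?p2 = "cpr2 C ?X A"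
  let ?t = "ccomp C ev (cpair C (ccomp C y ?p1) ?p2)" and ?t' = "ccomp C ev (cpair C (ccomp C y' ?p1) ?p2)"
  have "dle D (cprod C ?X A) (dre D (cpair C (ccomp C y ?p1) (ccomp C y' ?p1)) (ev_equiv W A B ev))
      (dre D (cpair C ?t ?t') (deq D B))"
    using ev_equiv_elim[of "ccomp C y ?p1" "ccomp C y' ?p1" ?p2] y A ev_arrs by simp
  moreover have "dle D (cprod C ?X A) (dre D (cpair C ?t ?t') (deq D B)) (dre D (cpair C ?t' ?t) (deq D B))"
    using deq_sym[of ?t ?t' B] y A ev_arrs by simp
  ultimately have "dle D (cprod C ?X A) (dre D (cpair C (ccomp C y ?p1) (ccomp C y' ?p1)) (ev_equiv W A B ev))
      (dre D (cpair C ?t' ?t) (deq D B))"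
    by (rule dle_trans) (use y A ev_arrs ev_equiv_Pr in simp_all)
  then show ?thesis
    using ev_equiv_intro[OF y(2) y(1) _ y(5) y(4), of "dre D (cpair C y y') (ev_equiv W A B ev)"] y A ev_arrs
      ev_equiv_Pr by simp
qed

lemma ev_equiv_trans:
  assumes y: "y1 \<in> cArr C" "y2 \<in> cArr C" "y3 \<in> cArr C" "cdom C y2 = cdom C y1" "cdom C y3 = cdom C y1"
    "ccod C y1 = W" "ccod C y2 = W" "ccod C y3 = W"
  shows "dle D (cdom C y1) (pmeet D (cdom C y1) (dre D (cpair C y1 y2) (ev_equiv W A B ev))
    (dre D (cpair C y2 y3) (ev_equiv W A B ev))) (dre D (cpair C y1 y3) (ev_equiv W A B ev))"
proof -
  let ?X = "cdom C y1"
  let ?XA = "cprod C ?X A"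
  let ?p1 = "cpr1 C ?X A" and ?p2 = "cpr2 C ?X A"
  let ?t1 = "ccomp C ev (cpair C (ccomp C y1 ?p1) ?p2)" and ?t2 = "ccomp C ev (cpair C (ccomp C y2 ?p1) ?p2)"
    and ?t3 = "ccomp C ev (cpair C (ccomp C y3 ?p1) ?p2)"
  let ?\<omega>12 = "dre D (cpair C (ccomp C y1 ?p1) (ccomp C y2 ?p1)) (ev_equiv W A B ev)"
    and ?\<omega>23 = "dre D (cpair C (ccomp C y2 ?p1) (ccomp C y3 ?p1)) (ev_equiv W A B ev)"
  have 12: "dle D ?XA ?\<omega>12 (dre D (cpair C ?t1 ?t2) (deq D B))"
    using ev_equiv_elim[of "ccomp C y1 ?p1" "ccomp C y2 ?p1" ?p2] y A ev_arrs by simp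
  have 23: "dle D ?XA ?\<omega>23 (dre D (cpair C ?t2 ?t3) (deq D B))"
    using ev_equiv_elim[of "ccomp C y2 ?p1" "ccomp C y3 ?p1" ?p2] y A ev_arrs by simp
  have "dle D ?XA (pmeet D ?XA ?\<omega>12 ?\<omega>23)
      (pmeet D ?XA (dre D (cpair C ?t1 ?t2) (deq D B)) (dre D (cpair C ?t2 ?t3) (deq D B)))"
    by (rule pmeet_mono[OF 12 23]) (use y A ev_arrs ev_equiv_Pr in simp_all)
  moreover have "dle D ?XA (pmeet D ?XA (dre D (cpair C ?t1 ?t2) (deq D B)) (dre D (cpair C ?t2 ?t3) (deq D B)))
      (dre D (cpair C ?t1 ?t3) (deq D B))"
    using deq_trans[of ?t1 ?t2 ?t3 B] y A ev_arrs by simp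
  ultimately have "dle D ?XA (pmeet D ?XA ?\<omega>12 ?\<omega>23) (dre D (cpair C ?t1 ?t3) (deq D B))"
    by (rule dle_trans) (use y A ev_arrs ev_equiv_Pr in simp_all)
  then show ?thesis
    using ev_equiv_intro[OF y(1) y(3) y(5) y(6) y(8),
        of "pmeet D ?X (dre D (cpair C y1 y2) (ev_equiv W A B ev)) (dre D (cpair C y2 y3) (ev_equiv W A B ev))"]
      y A ev_arrs ev_equiv_Pr by simp
qed

lemma per_equiv_ev_equiv: "per_equiv C D W (ev_equiv W A B ev)"
  by (rule per_equivI[OF W ev_equiv_Pr ev_equiv_refl ev_equiv_sym ev_equiv_trans])

text \<open>Related \<open>w \<sim> w'\<close> and equal \<open>a = a'\<close> give \<open>ev(w, a) = ev(w', a) = ev(w', a')\<close>.\<close>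
lemma qpres_ev: "qpres C D (qprod C D (W, ev_equiv W A B ev) (A, deq D A)) (B, deq D B) ev"
proof -
  let ?P = "cprod C W A"
  let ?Q = "cprod C ?P ?P"
  let ?x = "cpr1 C ?P ?P" and ?x' = "cpr2 C ?P ?P"
  let ?w = "ccomp C (cpr1 C W A) ?x" and ?v = "ccomp C (cpr2 C W A) ?x"
  let ?w' = "ccomp C (cpr1 C W A) ?x'" and ?v' = "ccomp C (cpr2 C W A) ?x'"
  let ?dW = "dre D (cpair C ?w ?w') (ev_equiv W A B ev)" and ?dA = "dre D (cpair C ?v ?v') (deq D A)"
  let ?m = "dre D (cpair C (ccomp C ev ?x) (ccomp C ev (cpair C ?w' ?v))) (deq D B)"
  have Pr: "?dW \<in> dPr D ?Q" "?dA \<in> dPr D ?Q" "?m \<in> dPr D ?Q"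
    using W A ev_arrs ev_equiv_Pr by simp_all
  have "dle D ?Q ?dW ?m"
    using ev_equiv_elim[of ?w ?w' ?v] W A ev_arrs by simp
  then have "dle D ?Q (pmeet D ?Q ?dW ?dA) (pmeet D ?Q ?m ?dA)"
    by (rule pmeet_mono[OF _ dle_refl]) (use W A Pr in simp_all)
  moreover
  let ?\<phi> = "dre D (cpair C (ccomp C ev (ccomp C ?x (cpr1 C ?Q A)))
      (ccomp C ev (cpair C (ccomp C ?w' (cpr1 C ?Q A)) (cpr2 C ?Q A)))) (deq D B)"
  have "dle D ?Q (pmeet D ?Q (dre D (cpair C (cid C ?Q) ?v) ?\<phi>) ?dA) (dre D (cpair C (cid C ?Q) ?v') ?\<phi>)"
    using deq_subst[of ?Q A ?\<phi> "cid C ?Q" ?v ?v'] W A ev_arrs by simp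
  then have "dle D ?Q (pmeet D ?Q ?m ?dA) (dre D (cpair C (ccomp C ev ?x) (ccomp C ev ?x')) (deq D B))"
    using W A ev_arrs by simp
  ultimately have "dle D ?Q (qprodrel C D W A (ev_equiv W A B ev) (deq D A))
      (dre D (cpair C (ccomp C ev ?x) (ccomp C ev ?x')) (deq D B))"
    unfolding qprodrel_unfold by (rule dle_trans) (use W A ev_arrs Pr in simp_all)
  then show ?thesis unfolding qpres_iff qprod_def qrel_iff using ev by simp
qed

lemma qpres_into_ev_equiv:
  assumes Z: "(Z,\<rho>) \<in> qobjs C D" and g: "g \<in> hom C Z W"
    and pres: "qpres C D (qprod C D (Z,\<rho>) (A, deq D A)) (B, deq D B) (ccomp C ev (ptimes C Z A g (cid C A)))"
  shows "qpres C D (Z,\<rho>) (W, ev_equiv W A B ev) g"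
proof -
  have g_arrs: "g \<in> cArr C" "cdom C g = Z" "ccod C g = W" using g by (auto simp: hom_def)
  have Zo: "Z \<in> cObj C" and \<rho>: "\<rho> \<in> dPr D (cprod C Z Z)" using Z per_equiv_Pr by auto
  let ?h = "ccomp C ev (cpair C (ccomp C g (cpr1 C Z A)) (cpr2 C Z A))"
  have h: "?h \<in> hom C (cprod C Z A) B" "qrel C D (cprod C Z A, qprodrel C D Z A \<rho> (deq D A)) (B, deq D B) ?h ?h"
    using pres Zo A by (simp_all add: qpres_iff qprod_def ptimes_def)
  let ?ZZ = "cprod C Z Z"
  let ?E = "cprod C ?ZZ A"
  let ?q = "cpr1 C ?ZZ A" and ?a = "cpr2 C ?ZZ A"
  let ?x = "cpair C (ccomp C (cpr1 C Z Z) ?q) ?a" and ?x' = "cpair C (ccomp C (cpr2 C Z Z) ?q) ?a"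
  have QPr: "qprodrel C D Z A \<rho> (deq D A) \<in> dPr D (cprod C (cprod C Z A) (cprod C Z A))"
    using Zo A \<rho> by simp
  have "dle D ?E (dre D (cpair C ?x ?x') (qprodrel C D Z A \<rho> (deq D A)))
      (dre D (cpair C (ccomp C ?h ?x) (ccomp C ?h ?x')) (deq D B))"
    using qrel_at[OF QPr _ h(1) h(1) h(2), of ?x ?x'] Zo A ev_arrs g_arrs by simp
  moreover have "dre D (cpair C ?x ?x') (qprodrel C D Z A \<rho> (deq D A)) =
      pmeet D ?E (dre D ?q \<rho>) (dre D (cpair C ?a ?a) (deq D A))"
    using dre_qprodrel[OF Zo A \<rho>, of "deq D A" ?x ?x'] Zo A by simp
  ultimately have sub: "dle D ?E (pmeet D ?E (dre D ?q \<rho>) (dre D (cpair C ?a ?a) (deq D A)))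
      (dre D (cpair C (ccomp C ?h ?x) (ccomp C ?h ?x')) (deq D B))"
    by simp
  have "dle D ?E (ptop D ?E) (dre D (cpair C ?a ?a) (deq D A))"
    using deq_refl[of ?a A] Zo A by simp
  then have refl: "dle D ?E (dre D ?q \<rho>) (dre D (cpair C ?a ?a) (deq D A))"
    by (rule dle_from_ptop) (use Zo A \<rho> in simp_all)
  have "dle D ?E (dre D ?q \<rho>) (dre D (cpair C (ccomp C ?h ?x) (ccomp C ?h ?x')) (deq D B))"
    by (rule le_pmeet_trans[OF dle_refl refl sub]) (use Zo A \<rho> ev_arrs g_arrs in simp_all)
  then have "dle D ?ZZ \<rho> (dre D (cpair C (ccomp C g (cpr1 C Z Z)) (ccomp C g (cpr2 C Z Z))) (ev_equiv W A B ev))"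
    using ev_equiv_intro[of "ccomp C g (cpr1 C Z Z)" "ccomp C g (cpr2 C Z Z)" \<rho>] Zo A \<rho> ev_arrs g_arrs by simp
  then show ?thesis unfolding qpres_iff qrel_iff using g by simp
qed

end

lemma weak_eval_ev_equiv_factor:
  assumes A: "A \<in> cObj C" and ev: "weak_eval C A B W ev"
    and Z: "(Z,\<rho>) \<in> qobjs C D" and H: "H \<in> hom (qcat C D) (qprod C D (Z,\<rho>) (A, deq D A)) (B, deq D B)"
  shows "\<exists>G\<in>hom (qcat C D) (Z,\<rho>) (W, ev_equiv W A B ev).
    H = qcomp C D (qprod C D (W, ev_equiv W A B ev) (A, deq D A), (B, deq D B),
        qclass C D (qprod C D (W, ev_equiv W A B ev) (A, deq D A)) (B, deq D B) ev)
      (ptimes (qcat C D) (Z,\<rho>) (A, deq D A) G (qid C D (A, deq D A)))"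
    (is "\<exists>G\<in>hom _ _ ?W. H = qcomp C D ?ev (ptimes _ _ ?A G _)")
proof -
  have W: "W \<in> cObj C" and ev_hom: "ev \<in> hom C (cprod C W A) B"
    and factor: "\<forall>Z\<in>cObj C. \<forall>h\<in>hom C (cprod C Z A) B. \<exists>g\<in>hom C Z W. h = ccomp C ev (ptimes C Z A g (cid C A))"
    using ev unfolding weak_eval_def by auto
  have B: "B \<in> cObj C" using ev_hom by (auto simp: hom_def)
  let ?X = "(cprod C W A, qprodrel C D W A (ev_equiv W A B ev) (deq D A))"
  let ?XZ = "(cprod C Z A, qprodrel C D Z A \<rho> (deq D A))"
  have Ao: "?A \<in> qobjs C D" and Bo: "(B, deq D B) \<in> qobjs C D" and Wo: "?W \<in> qobjs C D"
    using A B W per_equiv_deq per_equiv_ev_equiv[OF W A ev_hom] by simp_all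
  have X: "qprod C D ?W ?A = ?X" by (simp add: qprod_def)
  have Xo: "?X \<in> qobjs C D" and XZo: "?XZ \<in> qobjs C D"
    using qprod_obj[OF Wo Ao] qprod_obj[OF Z Ao] X by (simp_all add: qprod_def)
  have ev_rep: "represents ev ?ev"
    by (rule represents_class[OF qpres_ev[OF W A ev_hom]])
  have H': "H \<in> hom (qcat C D) ?XZ (B, deq D B)" using H by (simp add: qprod_def)
  obtain SH where SH: "H = (?XZ, (B, deq D B), SH)" using qcat_hom_triple[OF H'] by blast
  let ?h = "qrep H"
  have h: "represents ?h H" using represents_qrep_hom[OF H'] .
  then have "?h \<in> hom C (cprod C Z A) B" using SH by (simp add: represents_def qpres_iff)
  then obtain g where g: "g \<in> hom C Z W" and hg: "?h = ccomp C ev (ptimes C Z A g (cid C A))"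
    using factor Z by auto
  have "qpres C D (qprod C D (Z,\<rho>) ?A) (B, deq D B) (ccomp C ev (ptimes C Z A g (cid C A)))"
    using h SH hg by (simp add: represents_def qprod_def)
  then have g_pres: "qpres C D (Z,\<rho>) ?W g"
    by (rule qpres_into_ev_equiv[OF W A ev_hom Z g])
  let ?G = "((Z,\<rho>), ?W, qclass C D (Z,\<rho>) ?W g)"
  have G: "represents g ?G" by (rule represents_class[OF g_pres])
  have "represents (ptimes C Z A g (cid C A)) (ptimes (qcat C D) (Z,\<rho>) ?A ?G (qid C D ?A))"
    using represents_ptimes[OF Z Wo Ao Ao G represents_qid[OF Ao, unfolded qid_def]] by (simp add: qid_def)
  moreover obtain SK where K: "ptimes (qcat C D) (Z,\<rho>) ?A ?G (qid C D ?A) = (?XZ, ?X, SK)"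
    by (simp add: ptimes_def qpair_def qcomp_def qpr1_def qprod_def qid_def Let_def)
  ultimately have comp: "represents (ccomp C ev (ptimes C Z A g (cid C A)))
      (qcomp C D ?ev (ptimes (qcat C D) (Z,\<rho>) ?A ?G (qid C D ?A)))"
    using represents_qcomp[OF XZo Xo Bo _ ev_rep[unfolded X]] X by simp
  have "H = qcomp C D ?ev (ptimes (qcat C D) (Z,\<rho>) ?A ?G (qid C D ?A))"
    by (rule represents_eq[OF h[unfolded hg] comp]) (use SH K in \<open>simp_all add: qcomp_def\<close>)
  moreover have "?G \<in> hom (qcat C D) (Z,\<rho>) ?W" by (rule qcat_homI[OF Z Wo G])
  ultimately show ?thesis by blast
qed

lemma weak_eval_qcat_ev_equiv:
  assumes A: "A \<in> cObj C" and ev: "weak_eval C A B W ev"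
  shows "weak_eval (qcat C D) (A, deq D A) (B, deq D B) (W, ev_equiv W A B ev)
    (qprod C D (W, ev_equiv W A B ev) (A, deq D A), (B, deq D B),
     qclass C D (qprod C D (W, ev_equiv W A B ev) (A, deq D A)) (B, deq D B) ev)"
    (is "weak_eval _ ?A ?B ?W ?ev")
proof -
  have W: "W \<in> cObj C" and ev_hom: "ev \<in> hom C (cprod C W A) B"
    using ev unfolding weak_eval_def by auto
  have B: "B \<in> cObj C" using ev_hom by (auto simp: hom_def)
  have Ao: "?A \<in> qobjs C D" and Bo: "?B \<in> qobjs C D" and Wo: "?W \<in> qobjs C D"
    using A B W per_equiv_deq per_equiv_ev_equiv[OF W A ev_hom] by simp_all
  have "?ev \<in> hom (qcat C D) (qprod C D ?W ?A) ?B"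
    using qcat_homI[OF _ Bo represents_class[OF qpres_ev[OF W A ev_hom]]] qprod_obj[OF Wo Ao] by simp
  moreover have "\<exists>G\<in>hom (qcat C D) Zs ?W. H = qcomp C D ?ev (ptimes (qcat C D) Zs ?A G (qid C D ?A))"
    if "Zs \<in> qobjs C D" and "H \<in> hom (qcat C D) (qprod C D Zs ?A) ?B" for Zs H
    using weak_eval_ev_equiv_factor[OF A ev] that by (cases Zs) simp
  ultimately show ?thesis unfolding weak_eval_def qcat_sel using Wo by blast
qed

lemma AC_if_AC_qdoc:
  assumes A: "A \<in> cObj C" and AC: "AC (qcat C D) (qdoc C D) (A, deq D A)"
  shows "AC C D A"
  unfolding AC_iff
proof (intro ballI allI impI)
  fix B R W ev assume B: "B \<in> cObj C" and R: "R \<in> dPr D (cprod C A B)" and ev: "weak_eval C A B W ev"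
  have W: "W \<in> cObj C" and ev_hom: "ev \<in> hom C (cprod C W A) B" using ev unfolding weak_eval_def by auto
  let ?W = "(W, ev_equiv W A B ev)"
  let ?ev = "(qprod C D ?W (A, deq D A), (B, deq D B), qclass C D (qprod C D ?W (A, deq D A)) (B, deq D B) ev)"
  have Wo: "?W \<in> qobjs C D" and Bo: "(B, deq D B) \<in> qobjs C D"
    using W B per_equiv_ev_equiv[OF W A ev_hom] per_equiv_deq by simp_all
  have ev': "weak_eval (qcat C D) (A, deq D A) (B, deq D B) ?W ?ev"
    using weak_eval_qcat_ev_equiv[OF A ev] .
  then have ev'_hom: "?ev \<in> hom (qcat C D) (qprod C D ?W (A, deq D A)) (B, deq D B)"
    unfolding weak_eval_def by simp
  have Rq: "R \<in> dPr (qdoc C D) (qprod C D (A, deq D A) (B, deq D B))"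
    using descent_qprodrel_deq[OF A B R] by (simp add: qdoc_Pr qprod_def)
  have "dle (qdoc C D) (qterm C D) (choice_premise (qcat C D) (qdoc C D) (A, deq D A) (B, deq D B) R)
      (choice_conclusion (qcat C D) (qdoc C D) ?W (A, deq D A) ?ev R)"
    using AC Bo Rq ev' unfolding AC_iff qcat_sel by blast
  then show "dle D (cterm C) (choice_premise C D A B R) (choice_conclusion C D W A ev R)"
    using qdoc_choice_premise[OF A Bo Rq] qdoc_choice_conclusion[OF A Wo Bo ev'_hom
        represents_class[OF qpres_ev[OF W A ev_hom]] Rq]
    by (simp add: qterm_def)
qed

end

theorem proposition3p12:
  fixes C :: "('o,'a) cat" and D :: "('o,'a,'p) doctrine" and A :: 'o
  assumes "weak_hyperdoctrine C D"
    and "comprehensive_diagonals C D"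
    and "A \<in> cObj C"
  shows "AC C D A \<longleftrightarrow> AC (qcat C D) (qdoc C D) (A, deq D A)"
proof -
  interpret quantified_doctrine C D using assms(1) by (rule quantified_doctrineI)
  show ?thesis using AC_qdoc_if_AC AC_if_AC_qdoc assms(3) by blast
qed

end
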